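(* Let $p$ be a prime, $n$ a positive integer, and let $\widetilde T(n,\mathbf{Q}_p)$ be the group of upper-triangular invertible $n\times n$ matrices $A=\{a_{j,k}\}$ over $\mathbf{Q}_p$ with $|a_{j,j}|_p=1$ for all $j$. Let $N(A)=\max_{1\le j<k\le n}|a_{j,k}|_p^{1/(k-j)}$ and $D(A,A')=\max_j|a_{j,j}-a'_{j,j}|_p$. Then $N(AA')\le\max(N(A),N(A'))$ and $N(A^{-1})=N(A)$ for $A,A'\in\widetilde T(n,\mathbf{Q}_p)$; $N((A')^{-1}A)$ is a left-invariant and $N(A(A')^{-1})$ a right-invariant semi-ultrametric on $\widetilde T(n,\mathbf{Q}_p)$, both compatible with the topology induced from $M_n(\mathbf{Q}_p)$ and proper, so that $\widetilde T(n,\mathbf{Q}_p)$ has large compact open subgroups; $D$ is a semi-ultrametric invariant under both left and right translations; and $\max(N((A')^{-1}A),D(A,A'))$ (resp. $\max(N(A(A')^{-1}),D(A,A'))$) is a left-invariant (resp. right-invariant) ultrametric on $\widetilde T(n,\mathbf{Q}_p)$ determining its usual topology.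
   Context: A semi-ultrametric is a semimetric $d$ with $d(x,z)\le\max(d(x,y),d(y,z))$. A semimetric on a topological group is compatible if open balls are open, proper if closed bounded sets are compact. A topological group has large compact open subgroups if every compact set is contained in a compact open subgroup. *)

theory Defs
  imports "HOL-Analysis.Analysis" "HOL-Algebra.Group"
begin

text \<open>By Ostrowski's theorem the restriction to Q is the p-adic absolute value, so
such a field is (isometrically isomorphic to) the field of p-adic numbers Q_p.\<close>

definition padic_field :: "nat \<Rightarrow> ('a::field_char_0 \<Rightarrow> real) \<Rightarrow> bool" where
  "padic_field p absv \<longleftrightarrow>
     (\<forall>x. absv x \<ge> 0) \<and>
     (\<forall>x. absv x = 0 \<longleftrightarrow> x = 0) \<and>
     (\<forall>x y. absv (x * y) = absv x * absv y) \<and>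
     (\<forall>x y. absv (x + y) \<le> max (absv x) (absv y)) \<and>
     absv (of_nat p) = 1 / real p \<and>
     (\<forall>X :: nat \<Rightarrow> 'a.
        (\<forall>e>0. \<exists>M. \<forall>m\<ge>M. \<forall>k\<ge>M. absv (X m - X k) < e) \<longrightarrow>
        (\<exists>L. \<forall>e>0. \<exists>M. \<forall>m\<ge>M. absv (X m - L) < e)) \<and>
     (\<forall>x. \<forall>e>0. \<exists>q::rat. absv (x - of_rat q) < e)"

section \<open>n x n matrices (indices 0..n-1, entries zero outside)\<close>

type_synonym 'a mat = "nat \<Rightarrow> nat \<Rightarrow> 'a"

definition mat_mult :: "nat \<Rightarrow> 'a::field mat \<Rightarrow> 'a mat \<Rightarrow> 'a mat" where
  "mat_mult n A B = (\<lambda>j k. if j < n \<and> k < n then (\<Sum>l<n. A j l * B l k) else 0)"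

definition mat_one :: "nat \<Rightarrow> 'a::field mat" where
  "mat_one n = (\<lambda>j k. if j < n \<and> j = k then 1 else 0)"

definition is_mat :: "nat \<Rightarrow> 'a::field mat \<Rightarrow> bool" where
  "is_mat n A \<longleftrightarrow> (\<forall>j k. (n \<le> j \<or> n \<le> k) \<longrightarrow> A j k = 0)"

definition Ttilde :: "nat \<Rightarrow> ('a::field_char_0 \<Rightarrow> real) \<Rightarrow> 'a mat set" where
  "Ttilde n absv = {A. is_mat n A \<and>
      (\<forall>j k. k < j \<longrightarrow> A j k = 0) \<and>
      (\<exists>B. is_mat n B \<and> mat_mult n A B = mat_one n \<and> mat_mult n B A = mat_one n) \<and>
      (\<forall>j<n. absv (A j j) = 1)}"

definition Tgroup :: "nat \<Rightarrow> ('a::field_char_0 \<Rightarrow> real) \<Rightarrow> 'a mat monoid" where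
  "Tgroup n absv = \<lparr>carrier = Ttilde n absv, mult = mat_mult n, one = mat_one n\<rparr>"

definition Nval :: "nat \<Rightarrow> ('a::field_char_0 \<Rightarrow> real) \<Rightarrow> 'a mat \<Rightarrow> real" where
  "Nval n absv A = Max ({0} \<union> {absv (A j k) powr (1 / real (k - j)) | j k. j < k \<and> k < n})"

definition Dval :: "nat \<Rightarrow> ('a::field_char_0 \<Rightarrow> real) \<Rightarrow> 'a mat \<Rightarrow> 'a mat \<Rightarrow> real" where
  "Dval n absv A A' = Max ({0} \<union> {absv (A j j - A' j j) | j. j < n})"

text \<open>Sup-distance of entries: induces the topology of M_n(Q_p).\<close>
definition matdist :: "nat \<Rightarrow> ('a::field_char_0 \<Rightarrow> real) \<Rightarrow> 'a mat \<Rightarrow> 'a mat \<Rightarrow> real" where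
  "matdist n absv A B = Max ({0} \<union> {absv (A j k - B j k) | j k. j < n \<and> k < n})"

definition dL :: "nat \<Rightarrow> ('a::field_char_0 \<Rightarrow> real) \<Rightarrow> 'a mat \<Rightarrow> 'a mat \<Rightarrow> real" where
  "dL n absv A A' = Nval n absv (inv\<^bsub>Tgroup n absv\<^esub> A' \<otimes>\<^bsub>Tgroup n absv\<^esub> A)"

definition dR :: "nat \<Rightarrow> ('a::field_char_0 \<Rightarrow> real) \<Rightarrow> 'a mat \<Rightarrow> 'a mat \<Rightarrow> real" where
  "dR n absv A A' = Nval n absv (A \<otimes>\<^bsub>Tgroup n absv\<^esub> inv\<^bsub>Tgroup n absv\<^esub> A')"

definition semimetric_on :: "'b set \<Rightarrow> ('b \<Rightarrow> 'b \<Rightarrow> real) \<Rightarrow> bool" where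
  "semimetric_on S d \<longleftrightarrow> (\<forall>x\<in>S. d x x = 0) \<and> (\<forall>x\<in>S. \<forall>y\<in>S. 0 \<le> d x y \<and> d x y = d y x)"

definition semi_ultrametric_on :: "'b set \<Rightarrow> ('b \<Rightarrow> 'b \<Rightarrow> real) \<Rightarrow> bool" where
  "semi_ultrametric_on S d \<longleftrightarrow> semimetric_on S d \<and>
     (\<forall>x\<in>S. \<forall>y\<in>S. \<forall>z\<in>S. d x z \<le> max (d x y) (d y z))"

definition ultrametric_on :: "'b set \<Rightarrow> ('b \<Rightarrow> 'b \<Rightarrow> real) \<Rightarrow> bool" where
  "ultrametric_on S d \<longleftrightarrow> semi_ultrametric_on S d \<and> (\<forall>x\<in>S. \<forall>y\<in>S. d x y = 0 \<longrightarrow> x = y)"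

definition dtop :: "'b set \<Rightarrow> ('b \<Rightarrow> 'b \<Rightarrow> real) \<Rightarrow> 'b topology" where
  "dtop S d = topology (\<lambda>U. U \<subseteq> S \<and> (\<forall>x\<in>U. \<exists>e>0. \<forall>y\<in>S. d x y < e \<longrightarrow> y \<in> U))"

definition Ttop :: "nat \<Rightarrow> ('a::field_char_0 \<Rightarrow> real) \<Rightarrow> 'a mat topology" where
  "Ttop n absv = dtop (Ttilde n absv) (matdist n absv)"

definition compatible :: "'b topology \<Rightarrow> ('b \<Rightarrow> 'b \<Rightarrow> real) \<Rightarrow> bool" where
  "compatible X d \<longleftrightarrow> (\<forall>x\<in>topspace X. \<forall>r. openin X {y\<in>topspace X. d x y < r})"

definition proper_semimetric :: "'b topology \<Rightarrow> ('b \<Rightarrow> 'b \<Rightarrow> real) \<Rightarrow> bool" where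
  "proper_semimetric X d \<longleftrightarrow>
     (\<forall>K. closedin X K \<and> (\<exists>x\<in>topspace X. \<exists>r. K \<subseteq> {y\<in>topspace X. d x y \<le> r})
          \<longrightarrow> compactin X K)"

definition left_invariant :: "('b, 'c) monoid_scheme \<Rightarrow> ('b \<Rightarrow> 'b \<Rightarrow> real) \<Rightarrow> bool" where
  "left_invariant G d \<longleftrightarrow>
     (\<forall>g\<in>carrier G. \<forall>x\<in>carrier G. \<forall>y\<in>carrier G. d (g \<otimes>\<^bsub>G\<^esub> x) (g \<otimes>\<^bsub>G\<^esub> y) = d x y)"

definition right_invariant :: "('b, 'c) monoid_scheme \<Rightarrow> ('b \<Rightarrow> 'b \<Rightarrow> real) \<Rightarrow> bool" where
  "right_invariant G d \<longleftrightarrow>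
     (\<forall>g\<in>carrier G. \<forall>x\<in>carrier G. \<forall>y\<in>carrier G. d (x \<otimes>\<^bsub>G\<^esub> g) (y \<otimes>\<^bsub>G\<^esub> g) = d x y)"

definition large_compact_open_subgroups :: "('b, 'c) monoid_scheme \<Rightarrow> 'b topology \<Rightarrow> bool" where
  "large_compact_open_subgroups G X \<longleftrightarrow>
     (\<forall>K. compactin X K \<longrightarrow>
        (\<exists>H. subgroup H G \<and> compactin X H \<and> openin X H \<and> K \<subseteq> H))"

end

theory Submission
  imports Defs
begin

text \<open>\<open>N\<close> is an ultranorm on \<open>T~(n)\<close>: the \<open>(j, k)\<close> entry of \<open>AB\<close> is a sum of terms
  \<open>A\<^sub>j\<^sub>l B\<^sub>l\<^sub>k\<close> with \<open>|A\<^sub>j\<^sub>l| \<le> r\<^sup>l\<^sup>-\<^sup>j\<close> and \<open>|B\<^sub>l\<^sub>k| \<le> r\<^sup>k\<^sup>-\<^sup>l\<close>, so the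
  ultrametric inequality gives \<open>|(AB)\<^sub>j\<^sub>k| \<le> r\<^sup>k\<^sup>-\<^sup>j\<close>; the same estimate, run by induction on
  \<open>k - j\<close> through \<open>AA\<inverse> = 1\<close>, bounds \<open>A\<inverse>\<close>. An ultranorm on any group yields the invariant
  semi-ultrametrics \<open>N(B\<inverse>A)\<close> and \<open>N(AB\<inverse>)\<close>. They are comparable with the entrywise distance:
  \<open>A\<inverse>B - 1\<close> is small when \<open>B\<close> is close to \<open>A\<close>, and conversely \<open>B - A = A(A\<inverse>B - 1)\<close> is
  small when \<open>N(A\<inverse>B)\<close> and \<open>D(A, B) = D(A\<inverse>B, 1)\<close> are. This gives compatibility, the topology
  of the two maxima and their separation. Properness and the compact open subgroups \<open>{N \<le> R}\<close>
  come from the compactness of sets of matrices with bounded entries, which holds because \<open>Q\<^sub>p\<close>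
  is complete and its balls are totally bounded: a rational of absolute value at most 1 is
  \<open>p\<close>-adically close to an integer in \<open>[0, p\<^sup>k)\<close>.\<close>

lemma istopology_dtop:
  fixes d :: "'b \<Rightarrow> 'b \<Rightarrow> real"
  shows "istopology (\<lambda>U. U \<subseteq> S \<and> (\<forall>x\<in>U. \<exists>e>0. \<forall>y\<in>S. d x y < e \<longrightarrow> y \<in> U))"
  unfolding istopology_def
proof (intro conjI allI impI ballI)
  fix U V x assume U: "U \<subseteq> S \<and> (\<forall>x\<in>U. \<exists>e>0. \<forall>y\<in>S. d x y < e \<longrightarrow> y \<in> U)"
    and V: "V \<subseteq> S \<and> (\<forall>x\<in>V. \<exists>e>0. \<forall>y\<in>S. d x y < e \<longrightarrow> y \<in> V)" and x: "x \<in> U \<inter> V"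
  obtain e1 where "e1 > 0" "\<forall>y\<in>S. d x y < e1 \<longrightarrow> y \<in> U" using U x by blast
  moreover obtain e2 where "e2 > 0" "\<forall>y\<in>S. d x y < e2 \<longrightarrow> y \<in> V" using V x by blast
  ultimately show "\<exists>e>0. \<forall>y\<in>S. d x y < e \<longrightarrow> y \<in> U \<inter> V"
    by (intro exI[of _ "min e1 e2"]) auto
next
  fix \<K> x assume \<K>: "\<forall>U\<in>\<K>. U \<subseteq> S \<and> (\<forall>x\<in>U. \<exists>e>0. \<forall>y\<in>S. d x y < e \<longrightarrow> y \<in> U)"
    and x: "x \<in> \<Union>\<K>"
  then obtain U where U: "U \<in> \<K>" "x \<in> U" by blast
  then obtain e where "e > 0" "\<forall>y\<in>S. d x y < e \<longrightarrow> y \<in> U" using \<K> by blast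
  with U show "\<exists>e>0. \<forall>y\<in>S. d x y < e \<longrightarrow> y \<in> \<Union>\<K>" by blast
qed blast+

lemma openin_dtop:
  "openin (dtop S d) U \<longleftrightarrow> U \<subseteq> S \<and> (\<forall>x\<in>U. \<exists>e>0. \<forall>y\<in>S. d x y < e \<longrightarrow> y \<in> U)"
  unfolding dtop_def by (simp add: istopology_dtop)

lemma topspace_dtop [simp]: "topspace (dtop S d) = S"
proof -
  have "openin (dtop S d) S"
    by (auto simp: openin_dtop intro: exI[of _ 1])
  then show ?thesis
    using openin_subset by (force simp: topspace_def openin_dtop)
qed

definition controls :: "'b set \<Rightarrow> ('b \<Rightarrow> 'b \<Rightarrow> real) \<Rightarrow> ('b \<Rightarrow> 'b \<Rightarrow> real) \<Rightarrow> bool" where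
  "controls S d1 d2 \<longleftrightarrow> (\<forall>x\<in>S. \<forall>e>0. \<exists>\<delta>>0. \<forall>y\<in>S. d1 x y < \<delta> \<longrightarrow> d2 x y < e)"

lemma controlsD:
  assumes "controls S d1 d2" "x \<in> S" "0 < e"
  obtains \<delta> where "0 < \<delta>" "\<And>y. y \<in> S \<Longrightarrow> d1 x y < \<delta> \<Longrightarrow> d2 x y < e"
  using assms unfolding controls_def by blast

lemma controls_max:
  assumes "controls S d d1" "controls S d d2"
  shows "controls S d (\<lambda>x y. max (d1 x y) (d2 x y))"
  unfolding controls_def
proof (intro ballI allI impI)
  fix x and e :: real assume "x \<in> S" "0 < e"
  obtain \<delta>1 \<delta>2 where "0 < \<delta>1" "\<And>y. y \<in> S \<Longrightarrow> d x y < \<delta>1 \<Longrightarrow> d1 x y < e"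
    and "0 < \<delta>2" "\<And>y. y \<in> S \<Longrightarrow> d x y < \<delta>2 \<Longrightarrow> d2 x y < e"
    using controlsD[OF assms(1) \<open>x \<in> S\<close> \<open>0 < e\<close>] controlsD[OF assms(2) \<open>x \<in> S\<close> \<open>0 < e\<close>] by metis
  then show "\<exists>\<delta>>0. \<forall>y\<in>S. d x y < \<delta> \<longrightarrow> max (d1 x y) (d2 x y) < e"
    by (intro exI[of _ "min \<delta>1 \<delta>2"]) auto
qed

lemma dtop_eqI:
  assumes "controls S d2 d1" "controls S d1 d2"
  shows "dtop S d1 = dtop S d2"
proof -
  have "openin (dtop S d') U" if "openin (dtop S d) U" "controls S d' d" for d d' U
  proof -
    have "\<exists>\<delta>>0. \<forall>y\<in>S. d' x y < \<delta> \<longrightarrow> y \<in> U" if "x \<in> U" for x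
    proof -
      obtain e where "0 < e" "\<forall>y\<in>S. d x y < e \<longrightarrow> y \<in> U"
        using \<open>openin (dtop S d) U\<close> \<open>x \<in> U\<close> by (auto simp: openin_dtop)
      with controlsD[OF \<open>controls S d' d\<close>, of x e] \<open>openin (dtop S d) U\<close> \<open>x \<in> U\<close>
      show ?thesis by (metis openin_dtop subsetD)
    qed
    then show ?thesis using \<open>openin (dtop S d) U\<close> by (simp add: openin_dtop)
  qed
  then show ?thesis using assms by (auto simp: topology_eq)
qed

lemma semi_ultrametric_on_max:
  assumes "semi_ultrametric_on S d1" "semi_ultrametric_on S d2"
  shows "semi_ultrametric_on S (\<lambda>x y. max (d1 x y) (d2 x y))"
  using assms unfolding semi_ultrametric_on_def semimetric_on_def
  by (simp add: le_max_iff_disj max_def) (smt (verit))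

lemma left_invariant_max:
  "left_invariant G d1 \<Longrightarrow> left_invariant G d2 \<Longrightarrow> left_invariant G (\<lambda>x y. max (d1 x y) (d2 x y))"
  by (simp add: left_invariant_def)

lemma right_invariant_max:
  "right_invariant G d1 \<Longrightarrow> right_invariant G d2 \<Longrightarrow> right_invariant G (\<lambda>x y. max (d1 x y) (d2 x y))"
  by (simp add: right_invariant_def)

lemma controlsI_power_bound:
  fixes m d :: "'b \<Rightarrow> 'b \<Rightarrow> real"
  assumes "\<And>x. x \<in> S \<Longrightarrow> \<exists>M>0. \<forall>y\<in>S. \<forall>s. 0 \<le> s \<longrightarrow> s \<le> 1 \<longrightarrow> M * m x y \<le> s ^ k \<longrightarrow> d x y \<le> s"
  shows "controls S m d"
  unfolding controls_def
proof (intro ballI allI impI)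
  fix x and e :: real assume "x \<in> S" "0 < e"
  obtain M where "0 < M"
    and M: "\<forall>y\<in>S. \<forall>s. 0 \<le> s \<longrightarrow> s \<le> 1 \<longrightarrow> M * m x y \<le> s ^ k \<longrightarrow> d x y \<le> s"
    using assms[OF \<open>x \<in> S\<close>] by blast
  define s where "s = min 1 (e / 2)"
  have s: "0 < s" "s \<le> 1" "s < e" using \<open>0 < e\<close> by (auto simp: s_def)
  show "\<exists>\<delta>>0. \<forall>y\<in>S. m x y < \<delta> \<longrightarrow> d x y < e"
  proof (intro exI[of _ "s ^ k / M"] conjI ballI impI)
    fix y assume "y \<in> S" "m x y < s ^ k / M"
    then have "M * m x y < M * (s ^ k / M)"
      using \<open>0 < M\<close> by (intro mult_strict_left_mono)
    then have "d x y \<le> s"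
      using M \<open>y \<in> S\<close> s \<open>0 < M\<close> by simp
    then show "d x y < e" using s by linarith
  qed (use s \<open>0 < M\<close> in simp)
qed

lemma controlsI_linear_bound:
  fixes m d :: "'b \<Rightarrow> 'b \<Rightarrow> real"
  assumes "\<And>x. x \<in> S \<Longrightarrow> \<exists>M>0. \<forall>y\<in>S. m x y \<le> 1 \<longrightarrow> d x y \<le> M * m x y"
  shows "controls S m d"
  unfolding controls_def
proof (intro ballI allI impI)
  fix x and e :: real assume "x \<in> S" "0 < e"
  obtain M where "0 < M" and M: "\<forall>y\<in>S. m x y \<le> 1 \<longrightarrow> d x y \<le> M * m x y"
    using assms[OF \<open>x \<in> S\<close>] by blast
  define \<delta> where "\<delta> = min 1 (e / (2 * M))"
  have \<delta>: "0 < \<delta>" "\<delta> \<le> 1"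
    using \<open>0 < e\<close> \<open>0 < M\<close> by (simp_all add: \<delta>_def)
  have "M * \<delta> \<le> M * (e / (2 * M))"
    using \<open>0 < M\<close> by (intro mult_left_mono) (simp_all add: \<delta>_def)
  also have "\<dots> < e"
    using \<open>0 < e\<close> \<open>0 < M\<close> by simp
  finally have "M * \<delta> < e" .
  show "\<exists>\<delta>>0. \<forall>y\<in>S. m x y < \<delta> \<longrightarrow> d x y < e"
  proof (intro exI[of _ \<delta>] conjI ballI impI)
    fix y assume "y \<in> S" "m x y < \<delta>"
    then have "d x y \<le> M * m x y"
      using M \<open>\<delta> \<le> 1\<close> by simp
    moreover have "M * m x y < M * \<delta>"
      using \<open>0 < M\<close> \<open>m x y < \<delta>\<close> by simp
    ultimately show "d x y < e"
      using \<open>M * \<delta> < e\<close> by linarith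
  qed (use \<delta> in simp)
qed

text \<open>In the topology of a metric that controls a semi-ultrametric \<open>d\<close>, every \<open>d\<close>-ball
  contains the \<open>d\<close>-balls of the same radius around each of its points, hence is open; the closed
  balls are even clopen.\<close>

context
  fixes S :: "'b set" and d m :: "'b \<Rightarrow> 'b \<Rightarrow> real"
  assumes ultra: "semi_ultrametric_on S d" and ctrl: "controls S m d"
begin

private lemma ultra_le: "x \<in> S \<Longrightarrow> y \<in> S \<Longrightarrow> z \<in> S \<Longrightarrow> d x z \<le> max (d x y) (d y z)"
  using ultra by (simp add: semi_ultrametric_on_def)

private lemma ultra_nonneg: "x \<in> S \<Longrightarrow> y \<in> S \<Longrightarrow> 0 \<le> d x y"
  using ultra by (simp add: semi_ultrametric_on_def semimetric_on_def)

private lemma ultra_commute: "x \<in> S \<Longrightarrow> y \<in> S \<Longrightarrow> d x y = d y x"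
  using ultra by (simp add: semi_ultrametric_on_def semimetric_on_def)

lemma compatible_dtop: "compatible (dtop S m) d"
  unfolding compatible_def topspace_dtop openin_dtop
proof (intro ballI allI conjI)
  fix x y r assume x: "x \<in> S" and y: "y \<in> {y \<in> S. d x y < r}"
  then have "0 < r" using ultra_nonneg[of x y] by auto
  then obtain \<delta> where "0 < \<delta>" and \<delta>: "\<And>z. z \<in> S \<Longrightarrow> m y z < \<delta> \<Longrightarrow> d y z < r"
    using controlsD[OF ctrl] y by blast
  have "z \<in> {y \<in> S. d x y < r}" if "z \<in> S" "m y z < \<delta>" for z
    using ultra_le[of x y z] \<delta>[OF that] x y that by auto
  with \<open>0 < \<delta>\<close> show "\<exists>\<delta>>0. \<forall>z\<in>S. m y z < \<delta> \<longrightarrow> z \<in> {y \<in> S. d x y < r}" by blast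
qed auto

lemma openin_dtop_cball:
  assumes x: "x \<in> S" and "0 < r"
  shows "openin (dtop S m) {y \<in> S. d x y \<le> r}"
  unfolding openin_dtop
proof (intro conjI ballI)
  fix y assume y: "y \<in> {y \<in> S. d x y \<le> r}"
  then obtain \<delta> where "0 < \<delta>" and \<delta>: "\<And>z. z \<in> S \<Longrightarrow> m y z < \<delta> \<Longrightarrow> d y z < r"
    using controlsD[OF ctrl _ \<open>0 < r\<close>] by blast
  have "z \<in> {y \<in> S. d x y \<le> r}" if "z \<in> S" "m y z < \<delta>" for z
    using ultra_le[of x y z] \<delta>[OF that] x y that by auto
  with \<open>0 < \<delta>\<close> show "\<exists>\<delta>>0. \<forall>z\<in>S. m y z < \<delta> \<longrightarrow> z \<in> {y \<in> S. d x y \<le> r}" by blast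
qed auto

lemma closedin_dtop_cball:
  assumes x: "x \<in> S" and "0 \<le> r"
  shows "closedin (dtop S m) {y \<in> S. d x y \<le> r}"
  unfolding closedin_def topspace_dtop openin_dtop
proof (intro conjI ballI)
  fix y assume y: "y \<in> S - {y \<in> S. d x y \<le> r}"
  then have "0 < d x y" using \<open>0 \<le> r\<close> by auto
  then obtain \<delta> where "0 < \<delta>" and \<delta>: "\<And>z. z \<in> S \<Longrightarrow> m y z < \<delta> \<Longrightarrow> d y z < d x y"
    using controlsD[OF ctrl] y by blast
  have "z \<in> S - {y \<in> S. d x y \<le> r}" if "z \<in> S" "m y z < \<delta>" for z
    using ultra_le[of x z y] ultra_commute[of y z] \<delta>[OF that] x y that by auto
  with \<open>0 < \<delta>\<close> show "\<exists>\<delta>>0. \<forall>z\<in>S. m y z < \<delta> \<longrightarrow> z \<in> S - {y \<in> S. d x y \<le> r}" by blast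
qed auto

end

section \<open>Ultranormed groups\<close>

lemma (in group) inv_mult_cancel_left:
  "x \<in> carrier G \<Longrightarrow> y \<in> carrier G \<Longrightarrow> inv x \<otimes> (x \<otimes> y) = y"
  by (simp add: m_assoc[symmetric])

lemma (in group) mult_inv_cancel_left:
  "x \<in> carrier G \<Longrightarrow> y \<in> carrier G \<Longrightarrow> x \<otimes> (inv x \<otimes> y) = y"
  by (simp add: m_assoc[symmetric])

locale ultranormed_group = group G for G (structure) +
  fixes N :: "'a \<Rightarrow> real"
  assumes norm_one: "N \<one> = 0"
    and norm_inv: "x \<in> carrier G \<Longrightarrow> N (inv x) = N x"
    and norm_mult_le: "x \<in> carrier G \<Longrightarrow> y \<in> carrier G \<Longrightarrow> N (x \<otimes> y) \<le> max (N x) (N y)"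
begin

lemma norm_nonneg: "x \<in> carrier G \<Longrightarrow> 0 \<le> N x"
  using norm_mult_le[of x "inv x"] norm_inv[of x] by (simp add: norm_one)

lemma semi_ultrametric_left: "semi_ultrametric_on (carrier G) (\<lambda>x y. N (inv y \<otimes> x))"
  unfolding semi_ultrametric_on_def semimetric_on_def
proof (intro conjI ballI)
  fix x y z assume G: "x \<in> carrier G" "y \<in> carrier G" "z \<in> carrier G"
  show "N (inv x \<otimes> x) = 0" using G by (simp add: norm_one)
  show "0 \<le> N (inv y \<otimes> x)" using G by (simp add: norm_nonneg)
  show "N (inv y \<otimes> x) = N (inv x \<otimes> y)"
    using G norm_inv[of "inv y \<otimes> x"] by (simp add: inv_mult_group)
  have "(inv z \<otimes> y) \<otimes> (inv y \<otimes> x) = inv z \<otimes> x"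
    using G by (simp add: m_assoc mult_inv_cancel_left)
  then show "N (inv z \<otimes> x) \<le> max (N (inv y \<otimes> x)) (N (inv z \<otimes> y))"
    using G norm_mult_le[of "inv z \<otimes> y" "inv y \<otimes> x"] by (simp add: max.commute)
qed

lemma left_invariant_left: "left_invariant G (\<lambda>x y. N (inv y \<otimes> x))"
  unfolding left_invariant_def by (simp add: inv_mult_group m_assoc inv_mult_cancel_left)

lemma semi_ultrametric_right: "semi_ultrametric_on (carrier G) (\<lambda>x y. N (x \<otimes> inv y))"
  unfolding semi_ultrametric_on_def semimetric_on_def
proof (intro conjI ballI)
  fix x y z assume G: "x \<in> carrier G" "y \<in> carrier G" "z \<in> carrier G"
  show "N (x \<otimes> inv x) = 0" using G by (simp add: norm_one)
  show "0 \<le> N (x \<otimes> inv y)" using G by (simp add: norm_nonneg)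
  show "N (x \<otimes> inv y) = N (y \<otimes> inv x)"
    using G norm_inv[of "x \<otimes> inv y"] by (simp add: inv_mult_group)
  have "(x \<otimes> inv y) \<otimes> (y \<otimes> inv z) = x \<otimes> inv z"
    using G by (simp add: m_assoc inv_mult_cancel_left)
  then show "N (x \<otimes> inv z) \<le> max (N (x \<otimes> inv y)) (N (y \<otimes> inv z))"
    using G norm_mult_le[of "x \<otimes> inv y" "y \<otimes> inv z"] by simp
qed

lemma right_invariant_right: "right_invariant G (\<lambda>x y. N (x \<otimes> inv y))"
  unfolding right_invariant_def by (simp add: inv_mult_group m_assoc mult_inv_cancel_left)

lemma subgroup_norm_le:
  assumes "0 \<le> r"
  shows "subgroup {x \<in> carrier G. N x \<le> r} G"
proof (rule subgroupI)
  have "\<one> \<in> {x \<in> carrier G. N x \<le> r}"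
    using assms by (simp add: norm_one)
  then show "{x \<in> carrier G. N x \<le> r} \<noteq> {}" by blast
  fix x y assume "x \<in> {x \<in> carrier G. N x \<le> r}" "y \<in> {x \<in> carrier G. N x \<le> r}"
  then show "inv x \<in> {x \<in> carrier G. N x \<le> r}" "x \<otimes> y \<in> {x \<in> carrier G. N x \<le> r}"
    using norm_mult_le[of x y] by (auto simp: norm_inv)
qed auto

end

definition upper_triangular :: "nat \<Rightarrow> 'a::field mat \<Rightarrow> bool" where
  "upper_triangular n A \<longleftrightarrow> is_mat n A \<and> (\<forall>j k. k < j \<longrightarrow> A j k = 0)"

lemma mat_mult_apply: "j < n \<Longrightarrow> k < n \<Longrightarrow> mat_mult n A B j k = (\<Sum>l<n. A j l * B l k)"
  by (simp add: mat_mult_def)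

lemma is_mat_mat_mult [simp]: "is_mat n (mat_mult n A B)"
  unfolding is_mat_def mat_mult_def by auto

lemma is_mat_mat_one [simp]: "is_mat n (mat_one n)"
  unfolding is_mat_def mat_one_def by auto

lemma is_matD: "is_mat n A \<Longrightarrow> \<not> (j < n \<and> k < n) \<Longrightarrow> A j k = 0"
  unfolding is_mat_def by auto

lemma mat_eqI:
  "is_mat n A \<Longrightarrow> is_mat n B \<Longrightarrow> (\<And>j k. j < n \<Longrightarrow> k < n \<Longrightarrow> A j k = B j k) \<Longrightarrow> A = B"
  by (intro ext) (metis is_matD)

lemma mat_mult_assoc: "mat_mult n (mat_mult n A B) C = mat_mult n A (mat_mult n B C)"
proof (rule mat_eqI[of n])
  fix j k assume jk: "j < n" "k < n"
  have "mat_mult n (mat_mult n A B) C j k = (\<Sum>l<n. \<Sum>m<n. A j m * B m l * C l k)"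
    using jk by (simp add: mat_mult_apply sum_distrib_right)
  also have "\<dots> = (\<Sum>m<n. \<Sum>l<n. A j m * B m l * C l k)"
    by (rule sum.swap)
  also have "\<dots> = mat_mult n A (mat_mult n B C) j k"
    using jk by (simp add: mat_mult_apply sum_distrib_left mult.assoc)
  finally show "mat_mult n (mat_mult n A B) C j k = mat_mult n A (mat_mult n B C) j k" .
qed simp_all

lemma mat_mult_one_left: "is_mat n A \<Longrightarrow> mat_mult n (mat_one n) A = A"
proof (rule mat_eqI[of n])
  fix j k assume "j < n" "k < n"
  have "(\<Sum>l<n. mat_one n j l * A l k) = (\<Sum>l<n. if l = j then A j k else 0)"
    by (intro sum.cong) (auto simp: mat_one_def)
  then show "mat_mult n (mat_one n) A j k = A j k"
    using \<open>j < n\<close> \<open>k < n\<close> by (simp add: mat_mult_apply)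
qed simp_all

lemma mat_mult_one_right: "is_mat n A \<Longrightarrow> mat_mult n A (mat_one n) = A"
proof (rule mat_eqI[of n])
  fix j k assume "j < n" "k < n"
  have "(\<Sum>l<n. A j l * mat_one n l k) = (\<Sum>l<n. if l = k then A j k else 0)"
    by (intro sum.cong) (auto simp: mat_one_def)
  then show "mat_mult n A (mat_one n) j k = A j k"
    using \<open>j < n\<close> \<open>k < n\<close> by (simp add: mat_mult_apply)
qed simp_all

lemma upper_triangular_mat_one: "upper_triangular n (mat_one n)"
  by (simp add: upper_triangular_def mat_one_def is_mat_def)

lemma upper_triangular_mat_mult:
  assumes "upper_triangular n A" "upper_triangular n B"
  shows "upper_triangular n (mat_mult n A B)"
  unfolding upper_triangular_def
proof (intro conjI allI impI)
  fix j k :: nat assume "k < j"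
  then have "A j l * B l k = 0" for l
    using assms by (cases "l < j") (auto simp: upper_triangular_def)
  then show "mat_mult n A B j k = 0"
    by (simp add: mat_mult_def sum.neutral)
qed simp

lemma diag_mat_mult_upper_triangular:
  assumes "upper_triangular n A" "upper_triangular n B" "j < n"
  shows "mat_mult n A B j j = A j j * B j j"
proof -
  have "A j l * B l j = 0" if "l \<noteq> j" for l
    using assms(1,2) that by (cases "l < j") (auto simp: upper_triangular_def)
  then have "(\<Sum>l<n. A j l * B l j) = (\<Sum>l\<in>{j}. A j l * B l j)"
    using assms(3) by (intro sum.mono_neutral_right) auto
  then show ?thesis using assms(3) by (simp add: mat_mult_apply)
qed

function ut_inverse_entry :: "'a::field mat \<Rightarrow> nat \<Rightarrow> nat \<Rightarrow> 'a" where
  "ut_inverse_entry A j k =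
     (if k < j then 0 else if j = k then inverse (A j j)
      else - inverse (A j j) * (\<Sum>l\<in>{j<..k}. A j l * ut_inverse_entry A l k))"
  by auto
termination by (relation "Wellfounded.measure (\<lambda>(A, j, k). k - j)") auto

declare ut_inverse_entry.simps [simp del]

definition ut_inverse :: "nat \<Rightarrow> 'a::field mat \<Rightarrow> 'a mat" where
  "ut_inverse n A = (\<lambda>j k. if j < n \<and> k < n then ut_inverse_entry A j k else 0)"

lemma upper_triangular_ut_inverse: "upper_triangular n (ut_inverse n A)"
  by (simp add: upper_triangular_def is_mat_def ut_inverse_def ut_inverse_entry.simps)

lemma diag_ut_inverse: "j < n \<Longrightarrow> ut_inverse n A j j = inverse (A j j)"
  by (simp add: ut_inverse_def ut_inverse_entry.simps)

lemma mat_mult_ut_inverse_right: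
  assumes A: "upper_triangular n A" and nz: "\<And>j. j < n \<Longrightarrow> A j j \<noteq> 0"
  shows "mat_mult n A (ut_inverse n A) = mat_one n"
proof (rule mat_eqI[of n])
  fix j k assume jk: "j < n" "k < n"
  have A_low: "A j l = 0" if "l < j" for l
    using A that by (simp add: upper_triangular_def)
  show "mat_mult n A (ut_inverse n A) j k = mat_one n j k"
  proof (cases "k < j")
    case True
    then have "A j l * ut_inverse n A l k = 0" for l
      using A_low by (cases "l < j") (auto simp: ut_inverse_def ut_inverse_entry.simps)
    then show ?thesis using True jk by (simp add: mat_mult_apply mat_one_def sum.neutral)
  next
    case False
    have "(\<Sum>l<n. A j l * ut_inverse n A l k) = (\<Sum>l\<in>insert j {j<..k}. A j l * ut_inverse_entry A l k)"
      using False jk A_low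
      by (intro sum.mono_neutral_cong_right) (auto simp: ut_inverse_def ut_inverse_entry.simps)
    also have "\<dots> = A j j * ut_inverse_entry A j k + (\<Sum>l\<in>{j<..k}. A j l * ut_inverse_entry A l k)"
      by simp
    also have "\<dots> = mat_one n j k"
      using False jk nz[of j] by (auto simp: mat_one_def ut_inverse_entry.simps[of A j k])
    finally show ?thesis using jk by (simp add: mat_mult_apply)
  qed
qed simp_all

lemma mat_mult_ut_inverse_left:
  assumes A: "upper_triangular n A" and nz: "\<And>j. j < n \<Longrightarrow> A j j \<noteq> 0"
  shows "mat_mult n (ut_inverse n A) A = mat_one n"
proof -
  let ?B = "ut_inverse n A"
  have right_inv: "mat_mult n ?B (ut_inverse n ?B) = mat_one n"
    using nz by (intro mat_mult_ut_inverse_right) (simp_all add: upper_triangular_ut_inverse diag_ut_inverse)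
  have "A = mat_mult n (mat_mult n A ?B) (ut_inverse n ?B)"
    using A right_inv by (simp add: mat_mult_assoc mat_mult_one_right upper_triangular_def)
  also have "\<dots> = ut_inverse n ?B"
    using A nz upper_triangular_ut_inverse[of n ?B]
    by (simp add: mat_mult_ut_inverse_right mat_mult_one_left upper_triangular_def)
  finally show ?thesis using right_inv by simp
qed

lemma root_powr_le_iff:
  assumes "0 \<le> (a::real)" "0 \<le> r" "0 < m"
  shows "a powr (1 / real m) \<le> r \<longleftrightarrow> a \<le> r ^ m"
proof (cases "a = 0")
  case False
  have "(a powr (1 / real m)) ^ m = a"
    using False assms by (simp add: powr_realpow[symmetric] powr_powr)
  moreover have "a powr (1 / real m) \<le> r \<longleftrightarrow> (a powr (1 / real m)) ^ m \<le> r ^ m"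
    using assms by (intro power_mono_iff[symmetric]) auto
  ultimately show ?thesis by simp
qed (use assms in simp)

lemma finite_image_pairs_below:
  fixes n :: nat
  assumes "\<And>j k. P j k \<Longrightarrow> j < n \<and> k < n"
  shows "finite {f j k |j k. P j k}"
proof -
  have "{f j k |j k. P j k} \<subseteq> (\<lambda>(j, k). f j k) ` ({..<n} \<times> {..<n})"
    using assms by auto
  then show ?thesis
    by (rule finite_subset) (intro finite_imageI finite_cartesian_product; simp)
qed

lemma Max_zero_Un_le_iff: "finite S \<Longrightarrow> Max ({0} \<union> S) \<le> (r::real) \<longleftrightarrow> 0 \<le> r \<and> (\<forall>x\<in>S. x \<le> r)"
  by simp

lemma Max_zero_Un_less_iff: "finite S \<Longrightarrow> Max ({0} \<union> S) < (r::real) \<longleftrightarrow> 0 < r \<and> (\<forall>x\<in>S. x < r)"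
  by simp

locale nonarch_absv =
  fixes absv :: "'a::field_char_0 \<Rightarrow> real"
  assumes absv_nonneg [simp]: "0 \<le> absv x"
    and absv_eq_0_iff [simp]: "absv x = 0 \<longleftrightarrow> x = 0"
    and absv_mult: "absv (x * y) = absv x * absv y"
    and absv_add_le_max: "absv (x + y) \<le> max (absv x) (absv y)"
begin

lemma absv_0 [simp]: "absv 0 = 0"
  by simp

lemma absv_le_0_iff [simp]: "absv x \<le> 0 \<longleftrightarrow> x = 0"
  using absv_nonneg[of x] absv_eq_0_iff[of x] by linarith

lemma absv_1 [simp]: "absv 1 = 1"
proof -
  have "absv 1 * absv 1 = absv 1 * 1"
    using absv_mult[of 1 1] by simp
  then show ?thesis by (subst (asm) mult_left_cancel) simp_all
qed

lemma absv_minus [simp]: "absv (- x) = absv x"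
proof -
  have "absv (-1) * absv (-1) = 1"
    using absv_mult[of "-1" "-1"] by simp
  then have "absv (-1) = 1 \<or> absv (-1) = -1"
    by (simp add: power2_eq_1_iff flip: power2_eq_square)
  then have "absv (-1) = 1"
    using absv_nonneg[of "-1"] by linarith
  then show ?thesis using absv_mult[of "-1" x] by simp
qed

lemma absv_minus_commute: "absv (x - y) = absv (y - x)"
  by (metis absv_minus minus_diff_eq)

lemma absv_diff_le_max: "absv (x - z) \<le> max (absv (x - y)) (absv (y - z))"
  using absv_add_le_max[of "x - y" "y - z"] by simp

lemma absv_sum_le: "0 \<le> c \<Longrightarrow> (\<And>i. i \<in> A \<Longrightarrow> absv (f i) \<le> c) \<Longrightarrow> absv (sum f A) \<le> c"
proof (induction A rule: infinite_finite_induct)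
  case (insert x F)
  then have "absv (f x) \<le> c" "absv (sum f F) \<le> c" by simp_all
  then show ?case using absv_add_le_max[of "f x" "sum f F"] insert(1,2) by simp
qed auto

lemma absv_add_eq_left: "absv y < absv x \<Longrightarrow> absv (x + y) = absv x"
  using absv_add_le_max[of x y] absv_add_le_max[of "x + y" "- y"] by auto

lemma absv_inverse: "absv (inverse x) = inverse (absv x)"
proof (cases "x = 0")
  case False
  then have "absv x * absv (inverse x) = 1"
    using absv_mult[of x "inverse x"] by simp
  then show ?thesis by (simp add: inverse_unique)
qed simp

lemma absv_divide: "absv (x / y) = absv x / absv y"
  by (simp add: divide_inverse absv_mult absv_inverse)

lemma absv_power: "absv (x ^ k) = absv x ^ k"
  by (induction k) (simp_all add: absv_mult)

lemma absv_of_nat_le_1: "absv (of_nat m) \<le> 1"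
proof (induction m)
  case (Suc m)
  then show ?case using absv_add_le_max[of 1 "of_nat m"] by simp
qed simp

lemma absv_of_int_le_1: "absv (of_int m) \<le> 1"
proof -
  have "absv (of_int m) = absv (of_nat (nat \<bar>m\<bar>))"
    by (cases "0 \<le> m") simp_all
  then show ?thesis using absv_of_nat_le_1[of "nat \<bar>m\<bar>"] by linarith
qed

end

context nonarch_absv
begin

lemma Nval_le_iff:
  "Nval n absv A \<le> r \<longleftrightarrow> 0 \<le> r \<and> (\<forall>j k. j < k \<longrightarrow> k < n \<longrightarrow> absv (A j k) \<le> r ^ (k - j))"
proof -
  have root: "absv (A j k) powr (1 / real (k - j)) \<le> r \<longleftrightarrow> absv (A j k) \<le> r ^ (k - j)"
    if "j < k" "0 \<le> r" for j k
    using that by (intro root_powr_le_iff) auto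
  have "finite {absv (A j k) powr (1 / real (k - j)) |j k. j < k \<and> k < n}"
    by (rule finite_image_pairs_below) auto
  then have "Nval n absv A \<le> r \<longleftrightarrow>
      0 \<le> r \<and> (\<forall>j k. j < k \<longrightarrow> k < n \<longrightarrow> absv (A j k) powr (1 / real (k - j)) \<le> r)"
    unfolding Nval_def by (subst Max_zero_Un_le_iff) blast+
  with root show ?thesis by blast
qed

lemma Nval_nonneg: "0 \<le> Nval n absv A"
  using Nval_le_iff[of n A "Nval n absv A"] by simp

lemma Nval_entry_le: "Nval n absv A \<le> r \<Longrightarrow> j < k \<Longrightarrow> k < n \<Longrightarrow> absv (A j k) \<le> r ^ (k - j)"
  by (simp add: Nval_le_iff)

lemma matdist_le_iff:
  "matdist n absv A B \<le> r \<longleftrightarrow> 0 \<le> r \<and> (\<forall>j k. j < n \<longrightarrow> k < n \<longrightarrow> absv (A j k - B j k) \<le> r)"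
  unfolding matdist_def by (subst Max_zero_Un_le_iff) (auto intro: finite_image_pairs_below)

lemma matdist_less_iff:
  "matdist n absv A B < r \<longleftrightarrow> 0 < r \<and> (\<forall>j k. j < n \<longrightarrow> k < n \<longrightarrow> absv (A j k - B j k) < r)"
  unfolding matdist_def by (subst Max_zero_Un_less_iff) (auto intro: finite_image_pairs_below)

lemma matdist_nonneg [simp]: "0 \<le> matdist n absv A B"
  using matdist_le_iff[of n A B "matdist n absv A B"] by simp

lemma matdist_entry_le: "j < n \<Longrightarrow> k < n \<Longrightarrow> absv (A j k - B j k) \<le> matdist n absv A B"
  using matdist_le_iff[of n A B "matdist n absv A B"] by simp

lemma matdist_entry_le': "is_mat n A \<Longrightarrow> is_mat n B \<Longrightarrow> absv (A j k - B j k) \<le> matdist n absv A B"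
  by (cases "j < n \<and> k < n") (auto simp: matdist_entry_le is_matD)

lemma matdist_commute: "matdist n absv A B = matdist n absv B A"
proof -
  have "matdist n absv A B \<le> matdist n absv B A" for A B
    using matdist_entry_le[of _ n _ B A] by (simp add: matdist_le_iff absv_minus_commute)
  then show ?thesis by (metis antisym)
qed

lemma matdist_le_max: "matdist n absv A C \<le> max (matdist n absv A B) (matdist n absv B C)"
proof -
  have "absv (A j k - C j k) \<le> max (matdist n absv A B) (matdist n absv B C)"
    if "j < n" "k < n" for j k
    using absv_diff_le_max[of "A j k" "C j k" "B j k"]
      matdist_entry_le[OF that, of A B] matdist_entry_le[OF that, of B C] by linarith
  moreover have "0 \<le> max (matdist n absv A B) (matdist n absv B C)"
    by (simp add: le_max_iff_disj)
  ultimately show ?thesis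
    using matdist_le_iff[of n A C "max (matdist n absv A B) (matdist n absv B C)"] by blast
qed

lemma matdist_self [simp]: "matdist n absv A A = 0"
  using matdist_le_iff[of n A A 0] matdist_nonneg[of n A A] by simp

lemma matdist_eq_0_iff: "is_mat n A \<Longrightarrow> is_mat n B \<Longrightarrow> matdist n absv A B = 0 \<longleftrightarrow> A = B"
  using matdist_entry_le'[of n A B] by (auto intro: mat_eqI[of n])

lemma Dval_le_iff:
  "Dval n absv A B \<le> r \<longleftrightarrow> 0 \<le> r \<and> (\<forall>j. j < n \<longrightarrow> absv (A j j - B j j) \<le> r)"
  unfolding Dval_def by (subst Max_zero_Un_le_iff) auto

lemma Dval_nonneg: "0 \<le> Dval n absv A B"
  using Dval_le_iff[of n A B "Dval n absv A B"] by simp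

lemma Dval_entry_le: "j < n \<Longrightarrow> absv (A j j - B j j) \<le> Dval n absv A B"
  using Dval_le_iff[of n A B "Dval n absv A B"] by simp

lemma Dval_le_matdist: "Dval n absv A B \<le> matdist n absv A B"
  by (simp add: Dval_le_iff matdist_entry_le)

lemma Dval_cong:
  assumes "\<And>j. j < n \<Longrightarrow> absv (A j j - B j j) = absv (A' j j - B' j j)"
  shows "Dval n absv A B = Dval n absv A' B'"
proof -
  have "Dval n absv A B \<le> Dval n absv A' B'" if "\<And>j. j < n \<Longrightarrow> absv (A j j - B j j) = absv (A' j j - B' j j)"
    for A B A' B' :: "'a mat"
    using that Dval_entry_le[of _ n A' B'] by (simp add: Dval_le_iff Dval_nonneg)
  then show ?thesis using assms by (metis antisym)
qed

lemma semi_ultrametric_Dval: "semi_ultrametric_on S (Dval n absv)"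
  unfolding semi_ultrametric_on_def semimetric_on_def
proof (intro conjI ballI)
  fix A B C
  show "Dval n absv A A = 0" "0 \<le> Dval n absv A B"
    using Dval_le_iff[of n A A 0] Dval_nonneg by (auto intro: antisym)
  show "Dval n absv A B = Dval n absv B A"
    by (rule Dval_cong) (rule absv_minus_commute)
  have "absv (A j j - C j j) \<le> max (Dval n absv A B) (Dval n absv B C)" if "j < n" for j
    using absv_diff_le_max[of "A j j" "C j j" "B j j"]
      Dval_entry_le[OF that, of A B] Dval_entry_le[OF that, of B C] by linarith
  moreover have "0 \<le> max (Dval n absv A B) (Dval n absv B C)"
    by (simp add: le_max_iff_disj Dval_nonneg)
  ultimately show "Dval n absv A C \<le> max (Dval n absv A B) (Dval n absv B C)"
    using Dval_le_iff[of n A C "max (Dval n absv A B) (Dval n absv B C)"] by blast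
qed

end

context nonarch_absv
begin

lemma Ttilde_iff: "A \<in> Ttilde n absv \<longleftrightarrow> upper_triangular n A \<and> (\<forall>j<n. absv (A j j) = 1)"
proof
  assume A: "upper_triangular n A \<and> (\<forall>j<n. absv (A j j) = 1)"
  then have "\<And>j. j < n \<Longrightarrow> A j j \<noteq> 0"
    by (metis absv_0 zero_neq_one)
  with A have "\<exists>B. is_mat n B \<and> mat_mult n A B = mat_one n \<and> mat_mult n B A = mat_one n"
    using upper_triangular_ut_inverse[of n A]
    by (metis mat_mult_ut_inverse_left mat_mult_ut_inverse_right upper_triangular_def)
  with A show "A \<in> Ttilde n absv"
    by (simp add: Ttilde_def upper_triangular_def)
qed (simp add: Ttilde_def upper_triangular_def)

lemma TtildeD:
  assumes "A \<in> Ttilde n absv"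
  shows "upper_triangular n A" "is_mat n A" "k < j \<Longrightarrow> A j k = 0"
    "j < n \<Longrightarrow> absv (A j j) = 1" "j < n \<Longrightarrow> A j j \<noteq> 0"
  using assms by (auto simp: Ttilde_iff upper_triangular_def)

lemma Tgroup_simps [simp]:
  "carrier (Tgroup n absv) = Ttilde n absv"
  "mult (Tgroup n absv) = mat_mult n"
  "one (Tgroup n absv) = mat_one n"
  by (simp_all add: Tgroup_def)

lemma mat_one_Ttilde: "mat_one n \<in> Ttilde n absv"
  by (simp add: Ttilde_iff upper_triangular_mat_one) (simp add: mat_one_def)

lemma mat_mult_Ttilde:
  "A \<in> Ttilde n absv \<Longrightarrow> B \<in> Ttilde n absv \<Longrightarrow> mat_mult n A B \<in> Ttilde n absv"
  by (simp add: Ttilde_iff upper_triangular_mat_mult diag_mat_mult_upper_triangular absv_mult)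

lemma ut_inverse_Ttilde: "A \<in> Ttilde n absv \<Longrightarrow> ut_inverse n A \<in> Ttilde n absv"
  by (simp add: Ttilde_iff upper_triangular_ut_inverse diag_ut_inverse absv_inverse)

lemma group_Tgroup: "group (Tgroup n absv)"
proof (rule groupI)
  fix A assume "A \<in> carrier (Tgroup n absv)"
  then show "\<one>\<^bsub>Tgroup n absv\<^esub> \<otimes>\<^bsub>Tgroup n absv\<^esub> A = A"
    by (simp add: mat_mult_one_left TtildeD)
  show "\<exists>B\<in>carrier (Tgroup n absv). B \<otimes>\<^bsub>Tgroup n absv\<^esub> A = \<one>\<^bsub>Tgroup n absv\<^esub>"
    using \<open>A \<in> carrier (Tgroup n absv)\<close>
    by (intro bexI[of _ "ut_inverse n A"]) (simp_all add: ut_inverse_Ttilde mat_mult_ut_inverse_left TtildeD)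
qed (simp_all add: mat_mult_Ttilde mat_one_Ttilde mat_mult_assoc)

lemma inv_Tgroup: "A \<in> Ttilde n absv \<Longrightarrow> inv\<^bsub>Tgroup n absv\<^esub> A = ut_inverse n A"
  by (rule group.inv_equality[OF group_Tgroup])
    (simp_all add: ut_inverse_Ttilde mat_mult_ut_inverse_left TtildeD)

lemma Ttilde_entry_le_pow:
  assumes "A \<in> Ttilde n absv" "Nval n absv A \<le> r" "j \<le> k" "k < n"
  shows "absv (A j k) \<le> r ^ (k - j)"
  using assms Nval_entry_le[of n A r j k] by (cases "j = k") (auto simp: TtildeD)

lemma absv_summand_le_pow:
  assumes A: "A \<in> Ttilde n absv" and B: "B \<in> Ttilde n absv" and "0 \<le> r"
    and "j \<le> l \<Longrightarrow> l \<le> k \<Longrightarrow> absv (A j l) \<le> r ^ (l - j)"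
    and "j \<le> l \<Longrightarrow> l \<le> k \<Longrightarrow> absv (B l k) \<le> r ^ (k - l)"
  shows "absv (A j l * B l k) \<le> r ^ (k - j)"
proof (cases "j \<le> l \<and> l \<le> k")
  case True
  then have "absv (A j l * B l k) \<le> r ^ (l - j) * r ^ (k - l)"
    unfolding absv_mult using assms by (intro mult_mono) simp_all
  also have "\<dots> = r ^ (k - j)"
    using True by (simp add: power_add[symmetric])
  finally show ?thesis .
next
  case False
  then have "A j l = 0 \<or> B l k = 0" using TtildeD(3)[OF A] TtildeD(3)[OF B] by auto
  then show ?thesis using \<open>0 \<le> r\<close> by auto
qed

lemma Nval_mat_mult_le:
  assumes A: "A \<in> Ttilde n absv" and B: "B \<in> Ttilde n absv"
  shows "Nval n absv (mat_mult n A B) \<le> max (Nval n absv A) (Nval n absv B)"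
proof -
  let ?r = "max (Nval n absv A) (Nval n absv B)"
  have r: "0 \<le> ?r" by (simp add: le_max_iff_disj Nval_nonneg)
  have "absv (mat_mult n A B j k) \<le> ?r ^ (k - j)" if "j < k" "k < n" for j k
  proof -
    have "absv (A j l * B l k) \<le> ?r ^ (k - j)" if "l < n" for l
      using that \<open>k < n\<close>
      by (intro absv_summand_le_pow[OF A B r] Ttilde_entry_le_pow[OF A] Ttilde_entry_le_pow[OF B]) auto
    then have "absv (\<Sum>l<n. A j l * B l k) \<le> ?r ^ (k - j)"
      using r by (intro absv_sum_le) simp_all
    then show ?thesis using that by (simp add: mat_mult_apply)
  qed
  then show ?thesis using r by (simp add: Nval_le_iff)
qed

end

context nonarch_absv
begin

lemma Nval_le_if_mat_mult_eq_one:
  assumes A: "A \<in> Ttilde n absv" and B: "B \<in> Ttilde n absv" and AB: "mat_mult n A B = mat_one n"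
  shows "Nval n absv B \<le> Nval n absv A"
proof -
  let ?r = "Nval n absv A"
  have r: "0 \<le> ?r" by (rule Nval_nonneg)
  have "absv (B j k) \<le> ?r ^ (k - j)" if "j \<le> k" "k < n" for j k
    using that
  proof (induction "k - j" arbitrary: j rule: less_induct)
    case less
    show ?case
    proof (cases "j = k")
      case True
      then show ?thesis using TtildeD(4)[OF B] less.prems by simp
    next
      case False
      have "A j j * B j k + (\<Sum>l\<in>{..<n} - {j}. A j l * B l k) = mat_mult n A B j k"
        using less.prems by (simp add: mat_mult_apply sum.remove[of "{..<n}" j])
      also have "\<dots> = 0"
        using AB False less.prems by (simp add: mat_one_def)
      finally have "A j j * B j k = - (\<Sum>l\<in>{..<n} - {j}. A j l * B l k)"
        by (simp add: eq_neg_iff_add_eq_0)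
      then have "absv (B j k) = absv (\<Sum>l\<in>{..<n} - {j}. A j l * B l k)"
        using TtildeD(4)[OF A, of j] less.prems by (metis absv_minus absv_mult mult_1 le_less_trans)
      also have "\<dots> \<le> ?r ^ (k - j)"
      proof (rule absv_sum_le)
        fix l assume "l \<in> {..<n} - {j}"
        then show "absv (A j l * B l k) \<le> ?r ^ (k - j)"
          using less.prems
          by (intro absv_summand_le_pow[OF A B r] Ttilde_entry_le_pow[OF A] less.hyps) auto
      qed (simp add: r)
      finally show ?thesis .
    qed
  qed
  then show ?thesis using r by (simp add: Nval_le_iff)
qed

lemma Nval_ut_inverse: "A \<in> Ttilde n absv \<Longrightarrow> Nval n absv (ut_inverse n A) = Nval n absv A"
  by (intro antisym Nval_le_if_mat_mult_eq_one ut_inverse_Ttilde)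
    (simp_all add: mat_mult_ut_inverse_left mat_mult_ut_inverse_right TtildeD)

lemma Nval_mat_one: "Nval n absv (mat_one n) = 0"
  using Nval_le_iff[of n "mat_one n" 0] Nval_nonneg[of n "mat_one n"] by (simp add: mat_one_def)

lemma ultranormed_group_Tgroup: "ultranormed_group (Tgroup n absv) (Nval n absv)"
  by (intro ultranormed_group.intro group_Tgroup ultranormed_group_axioms.intro)
    (simp_all add: Nval_mat_one inv_Tgroup Nval_ut_inverse Nval_mat_mult_le)

lemma Nval_inv_Tgroup: "A \<in> Ttilde n absv \<Longrightarrow> Nval n absv (inv\<^bsub>Tgroup n absv\<^esub> A) = Nval n absv A"
  using ultranormed_group.norm_inv[OF ultranormed_group_Tgroup] by simp

lemma semi_ultrametric_dL: "semi_ultrametric_on (Ttilde n absv) (dL n absv)"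
  using ultranormed_group.semi_ultrametric_left[OF ultranormed_group_Tgroup]
  by (simp add: dL_def[abs_def])

lemma left_invariant_dL: "left_invariant (Tgroup n absv) (dL n absv)"
  using ultranormed_group.left_invariant_left[OF ultranormed_group_Tgroup]
  by (simp add: dL_def[abs_def])

lemma semi_ultrametric_dR: "semi_ultrametric_on (Ttilde n absv) (dR n absv)"
  using ultranormed_group.semi_ultrametric_right[OF ultranormed_group_Tgroup]
  by (simp add: dR_def[abs_def])

lemma right_invariant_dR: "right_invariant (Tgroup n absv) (dR n absv)"
  using ultranormed_group.right_invariant_right[OF ultranormed_group_Tgroup]
  by (simp add: dR_def[abs_def])

lemma dL_eq_Nval:
  assumes "A \<in> Ttilde n absv" "B \<in> Ttilde n absv"
  shows "dL n absv A B = Nval n absv (mat_mult n (ut_inverse n A) B)"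
  using semi_ultrametric_dL assms
  by (simp add: semi_ultrametric_on_def semimetric_on_def dL_def inv_Tgroup)

lemma dR_eq_Nval:
  assumes "A \<in> Ttilde n absv" "B \<in> Ttilde n absv"
  shows "dR n absv A B = Nval n absv (mat_mult n B (ut_inverse n A))"
  using semi_ultrametric_dR assms
  by (simp add: semi_ultrametric_on_def semimetric_on_def dR_def inv_Tgroup)

lemma left_invariant_Dval: "left_invariant (Tgroup n absv) (Dval n absv)"
  unfolding left_invariant_def Tgroup_simps
proof (intro ballI Dval_cong)
  fix G A B j assume "G \<in> Ttilde n absv" "A \<in> Ttilde n absv" "B \<in> Ttilde n absv" "j < n"
  then show "absv (mat_mult n G A j j - mat_mult n G B j j) = absv (A j j - B j j)"
    by (simp add: diag_mat_mult_upper_triangular TtildeD absv_mult flip: right_diff_distrib)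
qed

lemma right_invariant_Dval: "right_invariant (Tgroup n absv) (Dval n absv)"
  unfolding right_invariant_def Tgroup_simps
proof (intro ballI Dval_cong)
  fix G A B j assume "G \<in> Ttilde n absv" "A \<in> Ttilde n absv" "B \<in> Ttilde n absv" "j < n"
  then show "absv (mat_mult n A G j j - mat_mult n B G j j) = absv (A j j - B j j)"
    by (simp add: diag_mat_mult_upper_triangular TtildeD absv_mult flip: left_diff_distrib)
qed

end

section \<open>Comparison with the entrywise distance\<close>

context nonarch_absv
begin

lemma is_mat_entries_bounded:
  assumes "is_mat n A"
  shows "\<exists>M>0. \<forall>j k. absv (A j k) \<le> M"
proof -
  have "absv (A j k) \<le> matdist n absv A (\<lambda>_ _. 0)" for j k
    using matdist_entry_le'[OF assms, of "\<lambda>_ _. 0" j k] by (simp add: is_mat_def)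
  then show ?thesis
    by (intro exI[of _ "1 + matdist n absv A (\<lambda>_ _. 0)"]) (simp_all add: add_pos_nonneg add_increasing)
qed

lemma absv_mat_mult_le:
  assumes "\<And>l. absv (X j l) \<le> a" "\<And>l. absv (Y l k) \<le> b" "0 \<le> a" "0 \<le> b"
  shows "absv (mat_mult n X Y j k) \<le> a * b"
proof -
  have "absv (X j l * Y l k) \<le> a * b" for l
    unfolding absv_mult using assms by (intro mult_mono) simp_all
  then have "absv (\<Sum>l<n. X j l * Y l k) \<le> a * b"
    using assms by (intro absv_sum_le) simp_all
  then show ?thesis using assms by (simp add: mat_mult_def)
qed

lemma matdist_mat_mult_left_le:
  assumes "\<And>j l. absv (X j l) \<le> M" "0 \<le> M"
  shows "matdist n absv (mat_mult n X Y) (mat_mult n X Z) \<le> M * matdist n absv Y Z"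
proof -
  have "absv (mat_mult n X Y j k - mat_mult n X Z j k) \<le> M * matdist n absv Y Z"
    if "j < n" "k < n" for j k
  proof -
    have "mat_mult n X Y j k - mat_mult n X Z j k = (\<Sum>l<n. X j l * (Y l k - Z l k))"
      using that by (simp add: mat_mult_apply sum_subtractf right_diff_distrib)
    also have "absv \<dots> \<le> M * matdist n absv Y Z"
    proof (rule absv_sum_le)
      fix l assume "l \<in> {..<n}"
      then show "absv (X j l * (Y l k - Z l k)) \<le> M * matdist n absv Y Z"
        unfolding absv_mult using assms that by (intro mult_mono matdist_entry_le) simp_all
    qed (simp add: assms)
    finally show ?thesis .
  qed
  then show ?thesis using assms by (simp add: matdist_le_iff)
qed

lemma matdist_mat_mult_right_le:
  assumes "\<And>l k. absv (X l k) \<le> M" "0 \<le> M"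
  shows "matdist n absv (mat_mult n Y X) (mat_mult n Z X) \<le> matdist n absv Y Z * M"
proof -
  have "absv (mat_mult n Y X j k - mat_mult n Z X j k) \<le> matdist n absv Y Z * M"
    if "j < n" "k < n" for j k
  proof -
    have "mat_mult n Y X j k - mat_mult n Z X j k = (\<Sum>l<n. (Y j l - Z j l) * X l k)"
      using that by (simp add: mat_mult_apply sum_subtractf left_diff_distrib)
    also have "absv \<dots> \<le> matdist n absv Y Z * M"
    proof (rule absv_sum_le)
      fix l assume "l \<in> {..<n}"
      then show "absv ((Y j l - Z j l) * X l k) \<le> matdist n absv Y Z * M"
        unfolding absv_mult using assms that by (intro mult_mono matdist_entry_le) simp_all
    qed (simp add: assms)
    finally show ?thesis .
  qed
  then show ?thesis using assms by (simp add: matdist_le_iff)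
qed

lemma Nval_le_if_matdist_one_le:
  assumes E: "E \<in> Ttilde n absv" and s: "0 \<le> s" "s \<le> 1"
    and "matdist n absv E (mat_one n) \<le> s ^ n"
  shows "Nval n absv E \<le> s"
proof -
  have "absv (E j k) \<le> s ^ (k - j)" if "j < k" "k < n" for j k
  proof -
    have "absv (E j k) \<le> matdist n absv E (mat_one n)"
      using matdist_entry_le[of j n k E "mat_one n"] that by (simp add: mat_one_def)
    also have "\<dots> \<le> s ^ n" by fact
    also have "\<dots> \<le> s ^ (k - j)"
      using s that by (intro power_decreasing) simp_all
    finally show ?thesis .
  qed
  then show ?thesis using s by (simp add: Nval_le_iff)
qed

lemma matdist_one_le_max_Nval_Dval:
  assumes E: "E \<in> Ttilde n absv" and N: "Nval n absv E \<le> 1"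
  shows "matdist n absv E (mat_one n) \<le> max (Nval n absv E) (Dval n absv E (mat_one n))"
proof -
  have "absv (E j k - mat_one n j k) \<le> max (Nval n absv E) (Dval n absv E (mat_one n))"
    if "j < n" "k < n" for j k
  proof (cases j k rule: linorder_cases)
    case less
    have "absv (E j k) \<le> Nval n absv E ^ (k - j)"
      using less that by (intro Nval_entry_le) simp_all
    also have "\<dots> \<le> Nval n absv E ^ 1"
      using less N by (intro power_decreasing) (simp_all add: Nval_nonneg)
    finally show ?thesis using less by (simp add: mat_one_def)
  next
    case equal
    then show ?thesis using Dval_entry_le[OF that(1), of E "mat_one n"] by simp
  next
    case greater
    then show ?thesis using TtildeD(3)[OF E] by (simp add: mat_one_def le_max_iff_disj Nval_nonneg)
  qed
  moreover have "0 \<le> max (Nval n absv E) (Dval n absv E (mat_one n))"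
    by (simp add: le_max_iff_disj Nval_nonneg)
  ultimately show ?thesis
    using matdist_le_iff[of n E "mat_one n" "max (Nval n absv E) (Dval n absv E (mat_one n))"] by blast
qed

end

context nonarch_absv
begin

text \<open>Both comparisons pass through \<open>E = A\<inverse>B\<close> (resp. \<open>BA\<inverse>\<close>), using \<open>d(A, B) = N(E)\<close>,
  \<open>D(A, B) = D(E, 1)\<close> and that multiplication by a fixed matrix is Lipschitz for the entrywise
  distance.\<close>

lemma dL_le_if_matdist_le:
  assumes A: "A \<in> Ttilde n absv" and B: "B \<in> Ttilde n absv"
    and M: "\<And>j k. absv (ut_inverse n A j k) \<le> M" "0 \<le> M"
    and s: "0 \<le> s" "s \<le> 1" and "M * matdist n absv A B \<le> s ^ n"
  shows "dL n absv A B \<le> s"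
proof -
  let ?E = "mat_mult n (ut_inverse n A) B"
  have "matdist n absv ?E (mat_one n) = matdist n absv ?E (mat_mult n (ut_inverse n A) A)"
    using A by (simp add: mat_mult_ut_inverse_left TtildeD)
  also have "\<dots> \<le> M * matdist n absv B A"
    by (rule matdist_mat_mult_left_le[OF M])
  finally have "matdist n absv ?E (mat_one n) \<le> s ^ n"
    using assms by (simp add: matdist_commute)
  then show ?thesis
    using A B s by (simp add: dL_eq_Nval Nval_le_if_matdist_one_le mat_mult_Ttilde ut_inverse_Ttilde)
qed

lemma matdist_le_if_dL_le_1:
  assumes A: "A \<in> Ttilde n absv" and B: "B \<in> Ttilde n absv"
    and M: "\<And>j k. absv (A j k) \<le> M" "0 \<le> M" and d: "dL n absv A B \<le> 1"
  shows "matdist n absv A B \<le> M * max (dL n absv A B) (Dval n absv A B)"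
proof -
  let ?E = "mat_mult n (ut_inverse n A) B"
  have E: "?E \<in> Ttilde n absv" using A B by (simp add: mat_mult_Ttilde ut_inverse_Ttilde)
  have "Dval n absv ?E (mat_one n) = Dval n absv ?E (mat_mult n (ut_inverse n A) A)"
    using A by (simp add: mat_mult_ut_inverse_left TtildeD)
  also have "\<dots> = Dval n absv A B"
    using left_invariant_Dval A B semi_ultrametric_Dval[of "Ttilde n absv" n]
    by (simp add: left_invariant_def ut_inverse_Ttilde semi_ultrametric_on_def semimetric_on_def)
  finally have D: "Dval n absv ?E (mat_one n) = Dval n absv A B" .
  have "matdist n absv A B = matdist n absv (mat_mult n A (mat_one n)) (mat_mult n A ?E)"
    using A B by (simp add: mat_mult_one_right TtildeD mat_mult_assoc[symmetric] mat_mult_ut_inverse_right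
      mat_mult_one_left)
  also have "\<dots> \<le> M * matdist n absv (mat_one n) ?E"
    by (rule matdist_mat_mult_left_le[OF M])
  also have "\<dots> \<le> M * max (dL n absv A B) (Dval n absv A B)"
    using matdist_one_le_max_Nval_Dval[OF E] d A B M(2)
    by (simp add: matdist_commute D dL_eq_Nval mult_left_mono)
  finally show ?thesis .
qed

lemma dR_le_if_matdist_le:
  assumes A: "A \<in> Ttilde n absv" and B: "B \<in> Ttilde n absv"
    and M: "\<And>j k. absv (ut_inverse n A j k) \<le> M" "0 \<le> M"
    and s: "0 \<le> s" "s \<le> 1" and "M * matdist n absv A B \<le> s ^ n"
  shows "dR n absv A B \<le> s"
proof -
  let ?E = "mat_mult n B (ut_inverse n A)"
  have "matdist n absv ?E (mat_one n) = matdist n absv ?E (mat_mult n A (ut_inverse n A))"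
    using A by (simp add: mat_mult_ut_inverse_right TtildeD)
  also have "\<dots> \<le> matdist n absv B A * M"
    by (rule matdist_mat_mult_right_le[OF M])
  finally have "matdist n absv ?E (mat_one n) \<le> s ^ n"
    using assms by (simp add: matdist_commute mult.commute)
  then show ?thesis
    using A B s by (simp add: dR_eq_Nval Nval_le_if_matdist_one_le mat_mult_Ttilde ut_inverse_Ttilde)
qed

lemma matdist_le_if_dR_le_1:
  assumes A: "A \<in> Ttilde n absv" and B: "B \<in> Ttilde n absv"
    and M: "\<And>j k. absv (A j k) \<le> M" "0 \<le> M" and d: "dR n absv A B \<le> 1"
  shows "matdist n absv A B \<le> M * max (dR n absv A B) (Dval n absv A B)"
proof -
  let ?E = "mat_mult n B (ut_inverse n A)"
  have E: "?E \<in> Ttilde n absv" using A B by (simp add: mat_mult_Ttilde ut_inverse_Ttilde)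
  have "Dval n absv ?E (mat_one n) = Dval n absv ?E (mat_mult n A (ut_inverse n A))"
    using A by (simp add: mat_mult_ut_inverse_right TtildeD)
  also have "\<dots> = Dval n absv A B"
    using right_invariant_Dval A B semi_ultrametric_Dval[of "Ttilde n absv" n]
    by (simp add: right_invariant_def ut_inverse_Ttilde semi_ultrametric_on_def semimetric_on_def)
  finally have D: "Dval n absv ?E (mat_one n) = Dval n absv A B" .
  have "matdist n absv A B = matdist n absv (mat_mult n (mat_one n) A) (mat_mult n ?E A)"
    using A B by (simp add: mat_mult_one_left TtildeD mat_mult_assoc mat_mult_ut_inverse_left
      mat_mult_one_right)
  also have "\<dots> \<le> matdist n absv (mat_one n) ?E * M"
    by (rule matdist_mat_mult_right_le[OF M])
  also have "\<dots> \<le> M * max (dR n absv A B) (Dval n absv A B)"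
    using matdist_one_le_max_Nval_Dval[OF E] d A B M(2)
    by (simp add: matdist_commute D dR_eq_Nval mult_left_mono mult.commute)
  finally show ?thesis .
qed

lemma controls_matdist_dL: "controls (Ttilde n absv) (matdist n absv) (dL n absv)"
proof (rule controlsI_power_bound)
  fix A assume A: "A \<in> Ttilde n absv"
  then obtain M where "0 < M" "\<forall>j k. absv (ut_inverse n A j k) \<le> M"
    using is_mat_entries_bounded TtildeD(2)[OF ut_inverse_Ttilde] by blast
  with A show "\<exists>M>0. \<forall>B\<in>Ttilde n absv. \<forall>s. 0 \<le> s \<longrightarrow> s \<le> 1 \<longrightarrow> M * matdist n absv A B \<le> s ^ n
      \<longrightarrow> dL n absv A B \<le> s"
    using dL_le_if_matdist_le[OF A] by (metis less_imp_le)
qed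

lemma controls_matdist_dR: "controls (Ttilde n absv) (matdist n absv) (dR n absv)"
proof (rule controlsI_power_bound)
  fix A assume A: "A \<in> Ttilde n absv"
  then obtain M where "0 < M" "\<forall>j k. absv (ut_inverse n A j k) \<le> M"
    using is_mat_entries_bounded TtildeD(2)[OF ut_inverse_Ttilde] by blast
  with A show "\<exists>M>0. \<forall>B\<in>Ttilde n absv. \<forall>s. 0 \<le> s \<longrightarrow> s \<le> 1 \<longrightarrow> M * matdist n absv A B \<le> s ^ n
      \<longrightarrow> dR n absv A B \<le> s"
    using dR_le_if_matdist_le[OF A] by (metis less_imp_le)
qed

lemma controls_matdist_Dval: "controls S (matdist n absv) (Dval n absv)"
  unfolding controls_def using Dval_le_matdist by (meson le_less_trans)

lemma controls_max_dL_Dval_matdist: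
  "controls (Ttilde n absv) (\<lambda>A B. max (dL n absv A B) (Dval n absv A B)) (matdist n absv)"
proof (rule controlsI_linear_bound)
  fix A assume A: "A \<in> Ttilde n absv"
  then obtain M where "0 < M" "\<forall>j k. absv (A j k) \<le> M"
    using is_mat_entries_bounded TtildeD(2) by blast
  with A show "\<exists>M>0. \<forall>B\<in>Ttilde n absv. max (dL n absv A B) (Dval n absv A B) \<le> 1
      \<longrightarrow> matdist n absv A B \<le> M * max (dL n absv A B) (Dval n absv A B)"
    using matdist_le_if_dL_le_1[OF A] by (metis less_imp_le max.boundedE)
qed

lemma controls_max_dR_Dval_matdist:
  "controls (Ttilde n absv) (\<lambda>A B. max (dR n absv A B) (Dval n absv A B)) (matdist n absv)"
proof (rule controlsI_linear_bound)
  fix A assume A: "A \<in> Ttilde n absv"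
  then obtain M where "0 < M" "\<forall>j k. absv (A j k) \<le> M"
    using is_mat_entries_bounded TtildeD(2) by blast
  with A show "\<exists>M>0. \<forall>B\<in>Ttilde n absv. max (dR n absv A B) (Dval n absv A B) \<le> 1
      \<longrightarrow> matdist n absv A B \<le> M * max (dR n absv A B) (Dval n absv A B)"
    using matdist_le_if_dR_le_1[OF A] by (metis less_imp_le max.boundedE)
qed

end

context nonarch_absv
begin

lemma ultrametric_on_max_dL_Dval:
  "ultrametric_on (Ttilde n absv) (\<lambda>A B. max (dL n absv A B) (Dval n absv A B))"
  unfolding ultrametric_on_def
proof (intro conjI ballI impI)
  show "semi_ultrametric_on (Ttilde n absv) (\<lambda>A B. max (dL n absv A B) (Dval n absv A B))"
    by (intro semi_ultrametric_on_max semi_ultrametric_dL semi_ultrametric_Dval)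
  fix A B assume A: "A \<in> Ttilde n absv" and B: "B \<in> Ttilde n absv"
    and "max (dL n absv A B) (Dval n absv A B) = 0"
  moreover obtain M where "0 < M" "\<And>j k. absv (A j k) \<le> M"
    using is_mat_entries_bounded TtildeD(2)[OF A] by blast
  ultimately have "matdist n absv A B \<le> 0"
    using matdist_le_if_dL_le_1[OF A B, of M] by (simp add: max_def split: if_splits)
  then show "A = B"
    using matdist_eq_0_iff[OF TtildeD(2)[OF A] TtildeD(2)[OF B]] matdist_nonneg[of n A B] by linarith
qed

lemma ultrametric_on_max_dR_Dval:
  "ultrametric_on (Ttilde n absv) (\<lambda>A B. max (dR n absv A B) (Dval n absv A B))"
  unfolding ultrametric_on_def
proof (intro conjI ballI impI)
  show "semi_ultrametric_on (Ttilde n absv) (\<lambda>A B. max (dR n absv A B) (Dval n absv A B))"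
    by (intro semi_ultrametric_on_max semi_ultrametric_dR semi_ultrametric_Dval)
  fix A B assume A: "A \<in> Ttilde n absv" and B: "B \<in> Ttilde n absv"
    and "max (dR n absv A B) (Dval n absv A B) = 0"
  moreover obtain M where "0 < M" "\<And>j k. absv (A j k) \<le> M"
    using is_mat_entries_bounded TtildeD(2)[OF A] by blast
  ultimately have "matdist n absv A B \<le> 0"
    using matdist_le_if_dR_le_1[OF A B, of M] by (simp add: max_def split: if_splits)
  then show "A = B"
    using matdist_eq_0_iff[OF TtildeD(2)[OF A] TtildeD(2)[OF B]] matdist_nonneg[of n A B] by linarith
qed

lemma compatible_dL: "compatible (Ttop n absv) (dL n absv)"
  unfolding Ttop_def by (rule compatible_dtop[OF semi_ultrametric_dL controls_matdist_dL])

lemma compatible_dR: "compatible (Ttop n absv) (dR n absv)"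
  unfolding Ttop_def by (rule compatible_dtop[OF semi_ultrametric_dR controls_matdist_dR])

lemma dtop_max_dL_Dval: "dtop (Ttilde n absv) (\<lambda>A B. max (dL n absv A B) (Dval n absv A B)) = Ttop n absv"
  unfolding Ttop_def
  by (intro dtop_eqI controls_max controls_matdist_dL controls_matdist_Dval controls_max_dL_Dval_matdist)

lemma dtop_max_dR_Dval: "dtop (Ttilde n absv) (\<lambda>A B. max (dR n absv A B) (Dval n absv A B)) = Ttop n absv"
  unfolding Ttop_def
  by (intro dtop_eqI controls_max controls_matdist_dR controls_matdist_Dval controls_max_dR_Dval_matdist)

definition Tbox :: "nat \<Rightarrow> real \<Rightarrow> 'a mat set" where
  "Tbox n R = {A \<in> Ttilde n absv. \<forall>j k. absv (A j k) \<le> R}"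

lemma Ttilde_entry_le_pow_n:
  assumes E: "E \<in> Ttilde n absv" and "Nval n absv E \<le> r" "1 \<le> r"
  shows "absv (E j k) \<le> r ^ n"
proof (cases "j \<le> k \<and> k < n")
  case True
  then have "absv (E j k) \<le> r ^ (k - j)"
    using assms by (intro Ttilde_entry_le_pow) auto
  also have "\<dots> \<le> r ^ n"
    using True \<open>1 \<le> r\<close> by (intro power_increasing) auto
  finally show ?thesis .
next
  case False
  then have "E j k = 0" using TtildeD(2,3)[OF E] is_matD by (metis not_le)
  then show ?thesis using \<open>1 \<le> r\<close> by simp
qed

lemma dL_cball_subset_Tbox:
  assumes A: "A \<in> Ttilde n absv" and M: "\<And>j k. absv (A j k) \<le> M" "0 \<le> M" and "1 \<le> r"
  shows "{B \<in> Ttilde n absv. dL n absv A B \<le> r} \<subseteq> Tbox n (M * r ^ n)"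
proof safe
  fix B assume B: "B \<in> Ttilde n absv" and "dL n absv A B \<le> r"
  let ?E = "mat_mult n (ut_inverse n A) B"
  have E: "?E \<in> Ttilde n absv" "Nval n absv ?E \<le> r"
    using A B \<open>dL n absv A B \<le> r\<close> by (simp_all add: mat_mult_Ttilde ut_inverse_Ttilde dL_eq_Nval)
  have "B = mat_mult n A ?E"
    using A B by (simp add: mat_mult_assoc[symmetric] mat_mult_ut_inverse_right mat_mult_one_left TtildeD)
  moreover have "absv (mat_mult n A ?E j k) \<le> M * r ^ n" for j k
    using M \<open>1 \<le> r\<close> by (intro absv_mat_mult_le Ttilde_entry_le_pow_n[OF E]) simp_all
  ultimately have "absv (B j k) \<le> M * r ^ n" for j k by metis
  then show "B \<in> Tbox n (M * r ^ n)" using B by (simp add: Tbox_def)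
qed

lemma dR_cball_subset_Tbox:
  assumes A: "A \<in> Ttilde n absv" and M: "\<And>j k. absv (A j k) \<le> M" "0 \<le> M" and "1 \<le> r"
  shows "{B \<in> Ttilde n absv. dR n absv A B \<le> r} \<subseteq> Tbox n (r ^ n * M)"
proof safe
  fix B assume B: "B \<in> Ttilde n absv" and "dR n absv A B \<le> r"
  let ?E = "mat_mult n B (ut_inverse n A)"
  have E: "?E \<in> Ttilde n absv" "Nval n absv ?E \<le> r"
    using A B \<open>dR n absv A B \<le> r\<close> by (simp_all add: mat_mult_Ttilde ut_inverse_Ttilde dR_eq_Nval)
  have "B = mat_mult n ?E A"
    using A B by (simp add: mat_mult_assoc mat_mult_ut_inverse_left mat_mult_one_right TtildeD)
  moreover have "absv (mat_mult n ?E A j k) \<le> r ^ n * M" for j k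
    using M \<open>1 \<le> r\<close> by (intro absv_mat_mult_le Ttilde_entry_le_pow_n[OF E]) simp_all
  ultimately have "absv (B j k) \<le> r ^ n * M" for j k by metis
  then show "B \<in> Tbox n (r ^ n * M)" using B by (simp add: Tbox_def)
qed

lemma Metric_space_matdist: "Metric_space (Ttilde n absv) (matdist n absv)"
proof
  fix A B C
  show "0 \<le> matdist n absv A B" by simp
  show "matdist n absv A B = matdist n absv B A" by (rule matdist_commute)
  show "A \<in> Ttilde n absv \<Longrightarrow> B \<in> Ttilde n absv \<Longrightarrow> matdist n absv A B = 0 \<longleftrightarrow> A = B"
    by (simp add: matdist_eq_0_iff TtildeD)
  show "matdist n absv A C \<le> matdist n absv A B + matdist n absv B C"
    using matdist_le_max[of n A C B] matdist_nonneg[of n A B] matdist_nonneg[of n B C] by linarith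
qed

lemma Ttop_eq_mtopology: "Ttop n absv = Metric_space.mtopology (Ttilde n absv) (matdist n absv)"
  unfolding topology_eq Ttop_def openin_dtop Metric_space.openin_mtopology[OF Metric_space_matdist]
    subset_iff Metric_space.in_mball[OF Metric_space_matdist]
  by blast

lemma topspace_Ttop [simp]: "topspace (Ttop n absv) = Ttilde n absv"
  by (simp add: Ttop_def)

lemma compactin_Ttop_imp_Tbox:
  assumes "compactin (Ttop n absv) K"
  obtains R where "K \<subseteq> Tbox n R"
proof (cases "K = {}")
  case False
  interpret M: Metric_space "Ttilde n absv" "matdist n absv" by (rule Metric_space_matdist)
  obtain A r where K: "K \<subseteq> M.mcball A r"
    using M.compactin_imp_mbounded assms unfolding Ttop_eq_mtopology M.mbounded_def by blast
  with False have A: "A \<in> Ttilde n absv" by auto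
  then obtain M where M: "\<And>j k. absv (A j k) \<le> M"
    using is_mat_entries_bounded TtildeD(2) by blast
  have "absv (B j k) \<le> max M r" if "B \<in> K" for B j k
  proof -
    have "B \<in> Ttilde n absv" "absv (A j k - B j k) \<le> r"
      using K that A matdist_entry_le'[of n A B j k] by (auto simp: TtildeD)
    then show ?thesis
      using absv_diff_le_max[of "B j k" 0 "A j k"] M[of j k] absv_minus_commute[of "A j k" "B j k"]
      by (simp add: max_def split: if_splits)
  qed
  with K show thesis by (intro that[of "max M r"]) (auto simp: Tbox_def)
qed (simp add: that)

end

locale padic = nonarch_absv +
  fixes p :: nat
  assumes prime_p: "prime p"
    and absv_p: "absv (of_nat p) = 1 / real p"
    and absv_complete: "\<forall>e>0. \<exists>M. \<forall>m\<ge>M. \<forall>k\<ge>M. absv (X m - X (k::nat)) < e \<Longrightarrow>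
      \<exists>L. \<forall>e>0. \<exists>M. \<forall>m\<ge>M. absv (X m - L) < e"
    and absv_rat_dense: "0 < e \<Longrightarrow> \<exists>q::rat. absv (x - of_rat q) < e"

lemma padic_field_imp_padic: "prime p \<Longrightarrow> padic_field p absv \<Longrightarrow> padic absv p"
  unfolding padic_field_def padic_def padic_axioms_def nonarch_absv_def
  by (intro conjI allI impI) (simp_all add: imp_conjL)

context padic
begin

lemma p_gt_1: "1 < real p"
  using prime_gt_1_nat[OF prime_p] by simp

lemma absv_of_nat_p_power: "absv (of_nat p ^ k) = (1 / real p) ^ k"
  by (simp add: absv_power absv_p)

lemma absv_of_int_eq_1_if_coprime:
  assumes "coprime m (int p)"
  shows "absv (of_int m) = 1"
proof -
  obtain u v where "u * m + v * int p = 1"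
    using bezout_int[of m "int p"] assms by auto
  then have "(of_int u * of_int m + of_int v * of_nat p :: 'a) = 1"
    by (metis of_int_1 of_int_add of_int_mult of_int_of_nat_eq)
  then have "1 \<le> max (absv (of_int u * of_int m)) (absv (of_int v * of_nat p :: 'a))"
    using absv_add_le_max[of "of_int u * of_int m" "of_int v * of_nat p :: 'a"] by simp
  moreover have "absv (of_int u * of_int m :: 'a) \<le> absv (of_int m :: 'a)"
    using absv_of_int_le_1[of u] by (simp add: absv_mult mult_left_le_one_le)
  moreover have "absv (of_int v * of_nat p :: 'a) < 1"
    using absv_of_int_le_1[of v] p_gt_1 by (simp add: absv_mult absv_p mult_le_less_imp_less)
  ultimately have "1 \<le> absv (of_int m :: 'a)" by linarith
  then show ?thesis using absv_of_int_le_1[of m] by linarith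
qed

lemma coprime_denominator_if_absv_le_1:
  assumes q: "quotient_of q = (a, b)" and le1: "absv (of_rat q :: 'a) \<le> 1"
  shows "coprime b (int p)"
proof -
  have pr: "prime (int p)" using prime_p by simp
  have "\<not> int p dvd b"
  proof
    assume pb: "int p dvd b"
    have "\<not> int p dvd a"
    proof
      assume "int p dvd a"
      then have "\<bar>int p\<bar> = 1"
        using coprime_common_divisor_int[OF quotient_of_coprime[OF q]] pb by blast
      then show False using p_gt_1 by simp
    qed
    then have "absv (of_int a :: 'a) = 1"
      using prime_imp_coprime[OF pr] by (simp add: absv_of_int_eq_1_if_coprime coprime_commute)
    moreover obtain b' where "b = int p * b'" using pb by (auto elim: dvdE)
    then have "absv (of_int b :: 'a) \<le> 1 / real p"
      using absv_of_int_le_1[of b'] p_gt_1 by (simp add: absv_mult absv_p divide_right_mono)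
    moreover have "0 < absv (of_int b :: 'a)"
      using quotient_of_denom_pos[OF q] by (simp add: less_le)
    moreover have "(of_rat q :: 'a) = of_int a / of_int b"
      using quotient_of_div[OF q] by (simp add: of_rat_divide)
    ultimately have "real p \<le> absv (of_rat q :: 'a)"
      using p_gt_1 by (simp add: absv_divide field_simps)
    then show False using le1 p_gt_1 by linarith
  qed
  then show ?thesis using prime_imp_coprime[OF pr] by (simp add: coprime_commute)
qed

end

context padic
begin

text \<open>A rational \<open>a/b\<close> with \<open>|a/b| \<le> 1\<close> is congruent modulo \<open>p\<^sup>k\<close> to an integer
  \<open>c \<in> [0, p\<^sup>k)\<close>, since \<open>b\<close> is invertible modulo \<open>p\<^sup>k\<close>.\<close>

lemma rat_approx_by_nat:
  assumes "absv (of_rat q :: 'a) \<le> 1"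
  obtains c :: nat where "c < p ^ k" "absv (of_rat q - of_nat c :: 'a) \<le> (1 / real p) ^ k"
proof -
  obtain a b where q: "quotient_of q = (a, b)" by (cases "quotient_of q")
  define K where "K = int p ^ k"
  have "0 < K" using p_gt_1 by (simp add: K_def)
  have b1: "absv (of_int b :: 'a) = 1"
    using coprime_denominator_if_absv_le_1[OF q assms] by (rule absv_of_int_eq_1_if_coprime)
  have "coprime b K"
    using coprime_denominator_if_absv_le_1[OF q assms] by (simp add: K_def)
  then obtain u v where uv: "u * b + v * K = 1" using bezout_int[of b K] by auto
  define c where "c = (a * u) mod K"
  have c: "0 \<le> c" "c < K" using \<open>0 < K\<close> by (simp_all add: c_def)
  define t where "t = a * v + b * ((a * u) div K)"
  have "a - b * c = K * t"
    using uv div_mult_mod_eq[of "a * u" K] unfolding c_def t_def by algebra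
  moreover have "(of_rat q :: 'a) = of_int a / of_int b"
    using quotient_of_div[OF q] by (simp add: of_rat_divide)
  ultimately have "(of_rat q :: 'a) - of_int c = of_int K * of_int t / of_int b"
    using quotient_of_denom_pos[OF q] by (simp add: field_simps flip: of_int_mult of_int_diff)
  moreover have "absv (of_int K :: 'a) = (1 / real p) ^ k"
    using absv_of_nat_p_power[of k] by (simp add: K_def)
  ultimately have "absv (of_rat q - of_int c :: 'a) = (1 / real p) ^ k * absv (of_int t :: 'a)"
    using b1 by (simp add: absv_divide absv_mult)
  also have "\<dots> \<le> (1 / real p) ^ k"
    using absv_of_int_le_1 by (intro mult_left_le) simp_all
  finally have "absv (of_rat q - of_nat (nat c) :: 'a) \<le> (1 / real p) ^ k"
    using c by simp
  moreover have "nat c < p ^ k"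
    using c unfolding K_def by (metis nat_less_iff of_nat_power)
  ultimately show thesis using that by blast
qed

lemma finite_net_absv_le:
  assumes "0 < \<epsilon>"
  obtains F where "finite F" "\<And>x. absv x \<le> R \<Longrightarrow> \<exists>c\<in>F. absv (x - c) < \<epsilon>"
proof -
  obtain t where t: "R < real p ^ t" using real_arch_pow[OF p_gt_1] by blast
  obtain k where k: "real p ^ t / \<epsilon> < real p ^ k" using real_arch_pow[OF p_gt_1] by blast
  have pk: "(1 / real p) ^ k * real p ^ t < \<epsilon>"
    using k assms p_gt_1 by (simp add: field_simps power_one_over)
  have "\<exists>c\<in>(\<lambda>c. of_nat c / of_nat p ^ t) ` {..<p ^ k}. absv (x - c) < \<epsilon>" if x: "absv x \<le> R" for x
  proof -
    define y where "y = of_nat p ^ t * x"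
    have "absv y \<le> (1 / real p) ^ t * real p ^ t"
      using x t p_gt_1 by (simp add: y_def absv_mult absv_of_nat_p_power mult_left_mono)
    then have y1: "absv y \<le> 1"
      using p_gt_1 by (simp add: power_one_over)
    have pos: "0 < (1 / real p) ^ k" and le1: "(1 / real p) ^ k \<le> 1"
      using p_gt_1 by (simp_all add: power_le_one)
    obtain q where q: "absv (y - of_rat q) < (1 / real p) ^ k"
      using absv_rat_dense[OF pos] by blast
    then have "absv (of_rat q :: 'a) \<le> 1"
      using absv_add_le_max[of y "of_rat q - y"] y1 le1 absv_minus_commute[of y "of_rat q"] by simp
    then obtain c where c: "c < p ^ k" "absv (of_rat q - of_nat c :: 'a) \<le> (1 / real p) ^ k"
      by (rule rat_approx_by_nat)
    have yc: "absv (y - of_nat c) \<le> (1 / real p) ^ k"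
      using absv_diff_le_max[of y "of_nat c" "of_rat q"] q c(2) by linarith
    have "x - of_nat c / of_nat p ^ t = (y - of_nat c) / of_nat p ^ t"
      using p_gt_1 by (simp add: y_def field_simps)
    then have "absv (x - of_nat c / of_nat p ^ t) = absv (y - of_nat c) * real p ^ t"
      using p_gt_1 by (simp add: absv_divide absv_of_nat_p_power power_one_over)
    also have "\<dots> \<le> (1 / real p) ^ k * real p ^ t"
      using yc by (intro mult_right_mono) simp_all
    finally show ?thesis using c(1) pk by force
  qed
  then show thesis by (intro that[of "(\<lambda>c. of_nat c / of_nat p ^ t) ` {..<p ^ k}"]) auto
qed

end

section \<open>Compactness of bounded sets\<close>

context padic
begin

definition absv_tendsto :: "(nat \<Rightarrow> 'a) \<Rightarrow> 'a \<Rightarrow> bool" where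
  "absv_tendsto X L \<longleftrightarrow> (\<forall>e>0. \<exists>M. \<forall>m\<ge>M. absv (X m - L) < e)"

lemma absv_tendsto_absv_le:
  assumes X: "absv_tendsto X L" and R: "\<And>m. absv (X m) \<le> R"
  shows "absv L \<le> R"
proof (rule ccontr)
  assume "\<not> absv L \<le> R"
  moreover have "0 \<le> R" using R[of 0] absv_nonneg[of "X 0"] by linarith
  ultimately obtain M where "\<forall>m\<ge>M. absv (X m - L) < absv L"
    using X unfolding absv_tendsto_def by (meson le_less_trans not_le)
  then have "absv (L + (X M - L)) = absv L"
    using absv_add_eq_left by blast
  then show False using R[of M] \<open>\<not> absv L \<le> R\<close> by simp
qed

lemma absv_tendsto_absv_eq_1:
  assumes X: "absv_tendsto X L" and R: "\<And>m. absv (X m) = 1"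
  shows "absv L = 1"
proof -
  obtain M where "\<forall>m\<ge>M. absv (X m - L) < 1"
    using X unfolding absv_tendsto_def by (meson zero_less_one)
  then have "absv (L - X M) < absv (X M)"
    using R[of M] absv_minus_commute[of L "X M"] by auto
  then have "absv (X M + (L - X M)) = absv (X M)"
    by (rule absv_add_eq_left)
  then show ?thesis using R[of M] by simp
qed

lemma entrywise_limit_in_Tbox:
  assumes \<sigma>: "\<And>m. \<sigma> m \<in> Tbox n R" and L: "is_mat n L"
    and lim: "\<And>j k. j < n \<Longrightarrow> k < n \<Longrightarrow> absv_tendsto (\<lambda>m. \<sigma> m j k) (L j k)"
  shows "L \<in> Tbox n R"
proof -
  have T: "\<sigma> m \<in> Ttilde n absv" "absv (\<sigma> m j k) \<le> R" for m j k
    using \<sigma> by (auto simp: Tbox_def)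
  have "L j k = 0" if "k < j" for j k
  proof (cases "j < n")
    case True
    then have "absv (L j k) \<le> 0"
      using that TtildeD(3)[OF T(1) that] by (intro absv_tendsto_absv_le[OF lim]) auto
    then show ?thesis by simp
  qed (use L in \<open>simp add: is_matD\<close>)
  moreover have "absv (L j j) = 1" if "j < n" for j
    using that TtildeD(4)[OF T(1) that] by (intro absv_tendsto_absv_eq_1[OF lim]) auto
  moreover have "0 \<le> R"
    using T(2)[of 0 0 0] absv_nonneg[of "\<sigma> 0 0 0"] by linarith
  moreover have "absv (L j k) \<le> R" for j k
    using T L \<open>0 \<le> R\<close> by (cases "j < n \<and> k < n") (auto intro: absv_tendsto_absv_le[OF lim] order.trans simp: is_matD)
  ultimately show ?thesis
    using L by (simp add: Tbox_def Ttilde_iff upper_triangular_def)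
qed

lemma matdist_tendsto_if_entrywise:
  assumes lim: "\<And>j k. j < n \<Longrightarrow> k < n \<Longrightarrow> absv_tendsto (\<lambda>m. \<sigma> m j k) (L j k)" and "0 < e"
  shows "\<exists>N. \<forall>m\<ge>N. matdist n absv (\<sigma> m) L < e"
proof -
  have "\<forall>jk\<in>{..<n} \<times> {..<n}. eventually (\<lambda>m. absv (\<sigma> m (fst jk) (snd jk) - L (fst jk) (snd jk)) < e) sequentially"
    using lim \<open>0 < e\<close> unfolding absv_tendsto_def eventually_sequentially by auto
  then have "eventually (\<lambda>m. \<forall>jk\<in>{..<n} \<times> {..<n}. absv (\<sigma> m (fst jk) (snd jk) - L (fst jk) (snd jk)) < e)
      sequentially"
    by (intro eventually_ball_finite) auto
  then show ?thesis
    using \<open>0 < e\<close> unfolding eventually_sequentially by (auto simp: matdist_less_iff)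
qed

lemma Tbox_mcomplete: "Metric_space.mcomplete (Tbox n R) (matdist n absv)"
proof -
  have "Tbox n R \<subseteq> Ttilde n absv" by (auto simp: Tbox_def)
  then interpret S: Metric_space "Tbox n R" "matdist n absv"
    by (rule Metric_space.subspace[OF Metric_space_matdist])
  show ?thesis unfolding S.mcomplete_def
  proof (intro allI impI)
    fix \<sigma> assume "S.MCauchy \<sigma>"
    then have \<sigma>: "\<And>m. \<sigma> m \<in> Tbox n R"
      and cauchy: "\<forall>e>0. \<exists>N. \<forall>m m'. N \<le> m \<longrightarrow> N \<le> m' \<longrightarrow> matdist n absv (\<sigma> m) (\<sigma> m') < e"
      unfolding S.MCauchy_def by auto
    have "\<exists>c. absv_tendsto (\<lambda>m. \<sigma> m j k) c" if "j < n" "k < n" for j k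
      unfolding absv_tendsto_def
      using cauchy matdist_entry_le[OF that] by (intro absv_complete) (meson le_less_trans)
    then obtain L0 where L0: "\<And>j k. j < n \<Longrightarrow> k < n \<Longrightarrow> absv_tendsto (\<lambda>m. \<sigma> m j k) (L0 j k)"
      by metis
    define L where "L = (\<lambda>j k. if j < n \<and> k < n then L0 j k else 0)"
    have lim: "\<And>j k. j < n \<Longrightarrow> k < n \<Longrightarrow> absv_tendsto (\<lambda>m. \<sigma> m j k) (L j k)"
      using L0 by (simp add: L_def)
    have "L \<in> Tbox n R"
      by (rule entrywise_limit_in_Tbox[OF \<sigma> _ lim]) (simp_all add: L_def is_mat_def)
    then have "limitin S.mtopology \<sigma> L sequentially"
      using \<sigma> matdist_tendsto_if_entrywise[OF lim] by (simp add: S.limit_metric_sequentially)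
    then show "\<exists>L. limitin S.mtopology \<sigma> L sequentially" by blast
  qed
qed

lemma finite_mats_with_entries_in:
  assumes "finite F"
  shows "finite {P :: 'a mat. is_mat n P \<and> (\<forall>j<n. \<forall>k<n. P j k \<in> F)}" (is "finite ?P")
proof -
  let ?h = "\<lambda>P :: 'a mat. restrict (\<lambda>(j, k). P j k) ({..<n} \<times> {..<n})"
  have "?h ` ?P \<subseteq> PiE ({..<n} \<times> {..<n}) (\<lambda>_. F)" by (auto simp: PiE_def Pi_def)
  then have "finite (?h ` ?P)"
    by (rule finite_subset) (intro finite_PiE; simp add: assms)
  moreover have "inj_on ?h ?P"
  proof (rule inj_onI)
    fix P Q assume "P \<in> ?P" "Q \<in> ?P" and eq: "?h P = ?h Q"
    show "P = Q"
    proof (rule mat_eqI[of n])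
      fix j k assume "j < n" "k < n"
      then show "P j k = Q j k" using fun_cong[OF eq, of "(j, k)"] by simp
    qed (use \<open>P \<in> ?P\<close> \<open>Q \<in> ?P\<close> in auto)
  qed
  ultimately show ?thesis using finite_imageD by blast
qed

lemma Tbox_mtotally_bounded: "Metric_space.mtotally_bounded (Tbox n R) (matdist n absv) (Tbox n R)"
proof -
  have "Tbox n R \<subseteq> Ttilde n absv" by (auto simp: Tbox_def)
  then interpret S: Metric_space "Tbox n R" "matdist n absv"
    by (rule Metric_space.subspace[OF Metric_space_matdist])
  show ?thesis unfolding S.mtotally_bounded_def
  proof (intro allI impI)
    fix \<epsilon> :: real assume "0 < \<epsilon>"
    obtain F where "finite F" and F: "\<And>x. absv x \<le> R \<Longrightarrow> \<exists>c\<in>F. absv (x - c) < \<epsilon>"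
      using finite_net_absv_le[OF \<open>0 < \<epsilon>\<close>] by blast
    define Ps where "Ps = {P :: 'a mat. is_mat n P \<and> (\<forall>j<n. \<forall>k<n. P j k \<in> F)}"
    define I where "I = {P \<in> Ps. \<exists>A\<in>Tbox n R. matdist n absv P A < \<epsilon>}"
    define centre where "centre = (\<lambda>P. SOME A. A \<in> Tbox n R \<and> matdist n absv P A < \<epsilon>)"
    have centre: "centre P \<in> Tbox n R \<and> matdist n absv P (centre P) < \<epsilon>" if "P \<in> I" for P
      using that unfolding I_def centre_def by (metis (mono_tags, lifting) mem_Collect_eq someI_ex)
    show "\<exists>K. finite K \<and> K \<subseteq> Tbox n R \<and> Tbox n R \<subseteq> (\<Union>x\<in>K. S.mball x \<epsilon>)"
    proof (intro exI[of _ "centre ` I"] conjI subsetI)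
      have "I \<subseteq> Ps" by (auto simp: I_def)
      then show "finite (centre ` I)"
        using finite_mats_with_entries_in[OF \<open>finite F\<close>, of n] by (auto simp: Ps_def intro: finite_subset)
      show "B \<in> Tbox n R" if "B \<in> centre ` I" for B
        using that centre by blast
      fix A assume A: "A \<in> Tbox n R"
      then have "\<forall>j k. \<exists>c\<in>F. absv (A j k - c) < \<epsilon>"
        using F by (simp add: Tbox_def)
      then obtain g where g: "\<And>j k. g j k \<in> F \<and> absv (A j k - g j k) < \<epsilon>" by metis
      define P where "P = (\<lambda>j k. if j < n \<and> k < n then g j k else 0)"
      have "P \<in> Ps" using g by (simp add: Ps_def P_def is_mat_def)
      moreover have "matdist n absv P A < \<epsilon>"
        using g \<open>0 < \<epsilon>\<close> by (simp add: matdist_less_iff P_def absv_minus_commute)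
      ultimately have P: "P \<in> I" using A by (auto simp: I_def)
      have "matdist n absv (centre P) P < \<epsilon>"
        using centre[OF P] matdist_commute by metis
      then have "matdist n absv (centre P) A < \<epsilon>"
        using matdist_le_max[of n "centre P" A P] \<open>matdist n absv P A < \<epsilon>\<close>
        by (meson le_less_trans max_less_iff_conj)
      then show "A \<in> (\<Union>B\<in>centre ` I. S.mball B \<epsilon>)"
        using centre[OF P] A P by auto
    qed
  qed
qed

lemma compactin_Tbox: "compactin (Ttop n absv) (Tbox n R)"
proof -
  have sub: "Tbox n R \<subseteq> Ttilde n absv" by (auto simp: Tbox_def)
  interpret M: Metric_space "Ttilde n absv" "matdist n absv" by (rule Metric_space_matdist)
  interpret S: Submetric "Ttilde n absv" "matdist n absv" "Tbox n R"
    using sub by unfold_locales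
  have "compact_space S.sub.mtopology"
    using S.sub.compact_space_eq_mcomplete_mtotally_bounded Tbox_mcomplete Tbox_mtotally_bounded by blast
  then show ?thesis
    using sub by (simp add: Ttop_eq_mtopology compactin_subspace S.mtopology_submetric)
qed

end

context nonarch_absv
begin

lemma Nval_le_if_entries_le:
  assumes "1 \<le> R" "\<And>j k. absv (A j k) \<le> R"
  shows "Nval n absv A \<le> R"
proof -
  have "absv (A j k) \<le> R ^ (k - j)" if "j < k" for j k
  proof -
    have "R ^ 1 \<le> R ^ (k - j)"
      using assms(1) that by (intro power_increasing) simp_all
    then show ?thesis using assms(2)[of j k] by simp
  qed
  then show ?thesis using assms(1) by (simp add: Nval_le_iff)
qed

lemma dL_one_left: "B \<in> Ttilde n absv \<Longrightarrow> dL n absv (mat_one n) B = Nval n absv B"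
  by (simp add: dL_def inv_Tgroup mat_mult_one_right TtildeD(2)[OF ut_inverse_Ttilde] Nval_ut_inverse)

end

context padic
begin

lemma proper_semimetric_dL: "proper_semimetric (Ttop n absv) (dL n absv)"
  unfolding proper_semimetric_def topspace_Ttop
proof (intro allI impI)
  fix K assume "closedin (Ttop n absv) K \<and> (\<exists>A\<in>Ttilde n absv. \<exists>r. K \<subseteq> {B \<in> Ttilde n absv. dL n absv A B \<le> r})"
  then obtain A r where K: "closedin (Ttop n absv) K" and A: "A \<in> Ttilde n absv"
    and Kr: "K \<subseteq> {B \<in> Ttilde n absv. dL n absv A B \<le> r}" by blast
  obtain M where "0 < M" "\<And>j k. absv (A j k) \<le> M"
    using is_mat_entries_bounded TtildeD(2)[OF A] by blast
  then have "K \<subseteq> Tbox n (M * max 1 r ^ n)"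
    using Kr dL_cball_subset_Tbox[OF A, of M "max 1 r"] by fastforce
  then show "compactin (Ttop n absv) K"
    using closed_compactin[OF compactin_Tbox _ K] by blast
qed

lemma proper_semimetric_dR: "proper_semimetric (Ttop n absv) (dR n absv)"
  unfolding proper_semimetric_def topspace_Ttop
proof (intro allI impI)
  fix K assume "closedin (Ttop n absv) K \<and> (\<exists>A\<in>Ttilde n absv. \<exists>r. K \<subseteq> {B \<in> Ttilde n absv. dR n absv A B \<le> r})"
  then obtain A r where K: "closedin (Ttop n absv) K" and A: "A \<in> Ttilde n absv"
    and Kr: "K \<subseteq> {B \<in> Ttilde n absv. dR n absv A B \<le> r}" by blast
  obtain M where "0 < M" "\<And>j k. absv (A j k) \<le> M"
    using is_mat_entries_bounded TtildeD(2)[OF A] by blast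
  then have "K \<subseteq> Tbox n (max 1 r ^ n * M)"
    using Kr dR_cball_subset_Tbox[OF A, of M "max 1 r"] by fastforce
  then show "compactin (Ttop n absv) K"
    using closed_compactin[OF compactin_Tbox _ K] by blast
qed

text \<open>A compact set has bounded entries, so it lies in a ball \<open>{N \<le> R}\<close> around the identity,
  which is a compact clopen subgroup.\<close>

lemma large_compact_open_subgroups_Tgroup: "large_compact_open_subgroups (Tgroup n absv) (Ttop n absv)"
  unfolding large_compact_open_subgroups_def
proof (intro allI impI)
  fix K assume "compactin (Ttop n absv) K"
  then obtain R0 where K: "K \<subseteq> Tbox n R0" by (rule compactin_Ttop_imp_Tbox)
  define R where "R = max 1 R0"
  have "1 \<le> R" by (simp add: R_def)
  define H where "H = {A \<in> Ttilde n absv. Nval n absv A \<le> R}"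
  have ball: "H = {B \<in> Ttilde n absv. dL n absv (mat_one n) B \<le> R}"
    by (auto simp: H_def dL_one_left)
  have "K \<subseteq> H"
  proof
    fix A assume "A \<in> K"
    with K have "A \<in> Ttilde n absv" "\<And>j k. absv (A j k) \<le> R"
      by (auto simp: Tbox_def R_def le_max_iff_disj)
    then show "A \<in> H" using \<open>1 \<le> R\<close> by (simp add: H_def Nval_le_if_entries_le)
  qed
  moreover have "subgroup H (Tgroup n absv)"
    using ultranormed_group.subgroup_norm_le[OF ultranormed_group_Tgroup, of R] \<open>1 \<le> R\<close>
    by (simp add: H_def)
  moreover have "openin (Ttop n absv) H" "closedin (Ttop n absv) H"
    unfolding ball Ttop_def using \<open>1 \<le> R\<close> mat_one_Ttilde
    by (intro openin_dtop_cball closedin_dtop_cball semi_ultrametric_dL controls_matdist_dL; simp)+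
  moreover have "H \<subseteq> Tbox n (1 * R ^ n)"
    unfolding ball using \<open>1 \<le> R\<close> mat_one_Ttilde
    by (intro dL_cball_subset_Tbox) (simp_all add: mat_one_def)
  ultimately show "\<exists>H. subgroup H (Tgroup n absv) \<and> compactin (Ttop n absv) H \<and> openin (Ttop n absv) H
      \<and> K \<subseteq> H"
    using closed_compactin[OF compactin_Tbox] by blast
qed

end

theorem mainTheorem12:
  fixes p :: nat and absv :: "'a::field_char_0 \<Rightarrow> real" and n :: nat
  assumes "prime p" and "padic_field p absv" and "0 < n"
  shows "group (Tgroup n absv)
    \<and> (\<forall>A\<in>Ttilde n absv. \<forall>A'\<in>Ttilde n absv.
          Nval n absv (mat_mult n A A') \<le> max (Nval n absv A) (Nval n absv A'))
    \<and> (\<forall>A\<in>Ttilde n absv. Nval n absv (inv\<^bsub>Tgroup n absv\<^esub> A) = Nval n absv A)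
    \<and> semi_ultrametric_on (Ttilde n absv) (dL n absv)
    \<and> left_invariant (Tgroup n absv) (dL n absv)
    \<and> compatible (Ttop n absv) (dL n absv)
    \<and> proper_semimetric (Ttop n absv) (dL n absv)
    \<and> semi_ultrametric_on (Ttilde n absv) (dR n absv)
    \<and> right_invariant (Tgroup n absv) (dR n absv)
    \<and> compatible (Ttop n absv) (dR n absv)
    \<and> proper_semimetric (Ttop n absv) (dR n absv)
    \<and> large_compact_open_subgroups (Tgroup n absv) (Ttop n absv)
    \<and> semi_ultrametric_on (Ttilde n absv) (Dval n absv)
    \<and> left_invariant (Tgroup n absv) (Dval n absv)
    \<and> right_invariant (Tgroup n absv) (Dval n absv)
    \<and> ultrametric_on (Ttilde n absv) (\<lambda>A A'. max (dL n absv A A') (Dval n absv A A'))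
    \<and> left_invariant (Tgroup n absv) (\<lambda>A A'. max (dL n absv A A') (Dval n absv A A'))
    \<and> dtop (Ttilde n absv) (\<lambda>A A'. max (dL n absv A A') (Dval n absv A A')) = Ttop n absv
    \<and> ultrametric_on (Ttilde n absv) (\<lambda>A A'. max (dR n absv A A') (Dval n absv A A'))
    \<and> right_invariant (Tgroup n absv) (\<lambda>A A'. max (dR n absv A A') (Dval n absv A A'))
    \<and> dtop (Ttilde n absv) (\<lambda>A A'. max (dR n absv A A') (Dval n absv A A')) = Ttop n absv"
proof -
  interpret padic absv p
    using assms(1,2) by (rule padic_field_imp_padic)
  show ?thesis
    using Nval_mat_mult_le Nval_inv_Tgroup
    by (intro conjI ballI group_Tgroup semi_ultrametric_dL left_invariant_dL compatible_dL
        proper_semimetric_dL semi_ultrametric_dR right_invariant_dR compatible_dR proper_semimetric_dR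
        large_compact_open_subgroups_Tgroup semi_ultrametric_Dval left_invariant_Dval right_invariant_Dval
        ultrametric_on_max_dL_Dval dtop_max_dL_Dval ultrametric_on_max_dR_Dval dtop_max_dR_Dval
        left_invariant_max right_invariant_max) simp_all
qed

end
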